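(* Let $F_1:\mathbb{R}^{n_1}\times\mathbb{R}^{n_2}\times\mathbb{R}^m\rightrightarrows\mathbb{R}^{n_1}$, $F_2:\mathbb{R}^{n_2}\times\mathbb{R}^m\rightrightarrows\mathbb{R}^{n_2}$ and consider the cascade $\dot x_1\in F_1(x_1,x_2,u)$, $\dot x_2\in F_2(x_2,u)$, written $\dot x\in F(x_1,x_2,u):=F_1(x_1,x_2,u)\times F_2(x_2,u)$. Assume: (A.1) there exist a nonpathological $V_2:\mathbb{R}^{n_2}\to\mathbb{R}$ and $\underline\alpha_2,\overline\alpha_2,\rho_2\in\mathcal{K}_\infty$, $\gamma_2\in\mathcal{K}$ with $\underline\alpha_2(|x_2|)\le V_2(x_2)\le\overline\alpha_2(|x_2|)$ and $\max\dot{\overline V}_{2,F_2}(x_2,u)\le-\rho_2(V_2(x_2))+\gamma_2(|u|)$ for all $x_2\in\mathbb{R}^{n_2}$, $u\in\mathbb{R}^m$; (A.2) there exist a nonpathological $V_1:\mathbb{R}^{n_1}\to\mathbb{R}$ and $\underline\alpha_1,\overline\alpha_1,\rho_1,\gamma_1\in\mathcal{K}_\infty$ with $\underline\alpha_1(|x_1|)\le V_1(x_1)\le\overline\alpha_1(|x_1|)$ and $\max\dot{\overline V}_{1,F_1}(x_1,x_2,u)\le-\rho_1(V_1(x_1))+\gamma_1(V_2(x_2))+\gamma_2(|u|)$ for all $x_1,x_2,u$; (A.3) with $\overline\nu(s):=\gamma_1(s)/\rho_2(s)$, there is $M>0$ such that $\lim_{s\to0^+}\overline\nu(s)\le M$,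 i.e. $\gamma_1(s)\in O(\rho_2(s))$ as $s\to0^+$. Then there exists a continuous nondecreasing $\nu:\mathbb{R}_+\to\mathbb{R}_+$ with $\nu(s)\ge4\overline\nu(s)$ for all $s$; moreover, with such $\nu$, the function $W(x_1,x_2):=\int_0^{V_2(x_2)}\nu(s)\,ds+V_1(x_1)$ is a nonpathological ISS function for the cascade: there exist $\underline\alpha,\overline\alpha\in\mathcal{K}_\infty$ with $\underline\alpha(|(x_1,x_2)|)\le W(x_1,x_2)\le\overline\alpha(|(x_1,x_2)|)$ for all $(x_1,x_2)$, and $\rho\in\mathcal{K}_\infty$, $\gamma\in\mathcal{K}$ with $\max\dot{\overline W}_F(x_1,x_2,u)\le-\rho(W(x_1,x_2))+\gamma(|u|)$ for all $(x_1,x_2)\in\mathbb{R}^{n_1}\times\mathbb{R}^{n_2}$, $u\in\mathbb{R}^m$.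
   Context: Clarke gradient of locally Lipschitz $V$: $\partial V(x)=\operatorname{co}\{\lim\nabla V(x_k):x_k\to x,\ x_k\notin\mathcal{N}_V\}$. Nonpathological: locally Lipschitz $V$ such that for every absolutely continuous $\varphi$, for a.e. $t$ there is $a_t$ with $\langle v,\dot\varphi(t)\rangle=a_t$ for all $v\in\partial V(\varphi(t))$. Lie derivatives: $\dot{\overline V}_{2,F_2}(x_2,u):=\{a\mid\exists f\in F_2(x_2,u):\langle p,f\rangle=a\ \forall p\in\partial V_2(x_2)\}$, $\dot{\overline V}_{1,F_1}(x_1,x_2,u):=\{a\mid\exists f\in F_1(x_1,x_2,u):\langle p,f\rangle=a\ \forall p\in\partial V_1(x_1)\}$, $\dot{\overline W}_F(x,u):=\{a\mid\exists f\in F(x,u):\langle p,f\rangle=a\ \forall p\in\partial W(x)\}$; $\max\emptyset=-\infty$. "Nonpathological ISS function" means $W$ is nonpathological and satisfies the stated bounds. *)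

theory Defs
  imports "HOL-Analysis.Analysis"
begin

definition classK :: "(real \<Rightarrow> real) \<Rightarrow> bool" where
  "classK \<alpha> \<longleftrightarrow> continuous_on {0..} \<alpha> \<and> \<alpha> 0 = 0 \<and> strict_mono_on {0..} \<alpha>"

definition classKinf :: "(real \<Rightarrow> real) \<Rightarrow> bool" where
  "classKinf \<alpha> \<longleftrightarrow> classK \<alpha> \<and> filterlim \<alpha> at_top at_top"

definition loc_lipschitz :: "('a::euclidean_space \<Rightarrow> real) \<Rightarrow> bool" where
  "loc_lipschitz V \<longleftrightarrow> (\<forall>x. \<exists>e>0. \<exists>L. L-lipschitz_on (ball x e) V)"

definition clarke_grad :: "('a::euclidean_space \<Rightarrow> real) \<Rightarrow> 'a \<Rightarrow> 'a set" where
  "clarke_grad V x = convex hull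
     {g. \<exists>xk gk. xk \<longlonglongrightarrow> x \<and> gk \<longlonglongrightarrow> g \<and>
          (\<forall>k. (V has_derivative (\<lambda>h. inner (gk k) h)) (at (xk k)))}"

definition abs_cont_on :: "real set \<Rightarrow> (real \<Rightarrow> 'a::real_normed_vector) \<Rightarrow> bool" where
  "abs_cont_on S \<phi> \<longleftrightarrow> (\<forall>\<epsilon>>0. \<exists>\<delta>>0. \<forall>(I::nat set) lo hi.
      finite I \<and> (\<forall>i\<in>I. lo i \<le> hi i \<and> lo i \<in> S \<and> hi i \<in> S) \<and>
      (\<forall>i\<in>I. \<forall>j\<in>I. i \<noteq> j \<longrightarrow> {lo i<..<hi i} \<inter> {lo j<..<hi j} = {}) \<and>
      (\<Sum>i\<in>I. hi i - lo i) < \<delta> \<longrightarrow>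
      (\<Sum>i\<in>I. norm (\<phi> (hi i) - \<phi> (lo i))) < \<epsilon>)"

definition nonpathological :: "('a::euclidean_space \<Rightarrow> real) \<Rightarrow> bool" where
  "nonpathological V \<longleftrightarrow> loc_lipschitz V \<and>
     (\<forall>(\<phi>::real \<Rightarrow> 'a) a b. abs_cont_on {a..b} \<phi> \<longrightarrow>
        (AE t in lebesgue. t \<in> {a..b} \<longrightarrow>
           \<phi> differentiable (at t) \<and>
           (\<exists>c. \<forall>v\<in>clarke_grad V (\<phi> t). inner v (vector_derivative \<phi> (at t)) = c)))"

definition lie_set :: "('a::euclidean_space \<Rightarrow> real) \<Rightarrow> 'a \<Rightarrow> 'a set \<Rightarrow> real set" where
  "lie_set V x Fx = {a. \<exists>f\<in>Fx. \<forall>p\<in>clarke_grad V x. inner p f = a}"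

text \<open>"max S \<le> c" with max of the empty set = -infinity.\<close>
definition max_le :: "real set \<Rightarrow> real \<Rightarrow> bool" where
  "max_le S c \<longleftrightarrow> (\<forall>a\<in>S. a \<le> c)"

end

theory Submission
  imports Defs
begin

text \<open>
  Write \<open>G s = \<integral>\<^sub>0\<^sup>s \<nu>\<close>, so that \<open>W = G \<circ> V\<^sub>2 + V\<^sub>1\<close>. Since \<open>G\<close> is \<open>C\<^sup>1\<close>, every limit of
  gradients of \<open>W\<close> at \<open>(x\<^sub>1, x\<^sub>2)\<close> splits into a limit gradient of \<open>V\<^sub>1\<close> and \<open>\<nu>(V\<^sub>2 x\<^sub>2)\<close>
  times one of \<open>V\<^sub>2\<close> (the second part tends to \<open>0\<close> where \<open>\<nu>(V\<^sub>2 x\<^sub>2) = 0\<close>), and conversely.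
  Hence \<open>\<partial>W(x\<^sub>1, x\<^sub>2) = \<partial>V\<^sub>1(x\<^sub>1) \<times> \<nu>(V\<^sub>2 x\<^sub>2) \<partial>V\<^sub>2(x\<^sub>2)\<close>: this makes \<open>W\<close> nonpathological, and
  every value of its set-valued Lie derivative is bounded by the bound for \<open>V\<^sub>1\<close> plus
  \<open>\<nu>(V\<^sub>2)\<close> times the bound for \<open>V\<^sub>2\<close>. In that sum the cross term \<open>\<gamma>\<^sub>1(V\<^sub>2)\<close> is absorbed by
  \<open>\<nu>(V\<^sub>2) \<rho>\<^sub>2(V\<^sub>2) / 4\<close> because \<open>\<nu> \<ge> 4 \<gamma>\<^sub>1 / \<rho>\<^sub>2\<close>, and \<open>\<nu>(V\<^sub>2) \<gamma>\<^sub>2(|u|)\<close> is at most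
  \<open>\<nu>(V\<^sub>2) \<rho>\<^sub>2(V\<^sub>2) / 2\<close> unless \<open>\<rho>\<^sub>2(V\<^sub>2) < 2 \<gamma>\<^sub>2(|u|)\<close>, in which case it is a gain in \<open>|u|\<close>.
\<close>

section \<open>Comparison functions\<close>

lemma classK_nonneg: "classK f \<Longrightarrow> 0 \<le> x \<Longrightarrow> 0 \<le> f x"
  unfolding classK_def by (metis atLeast_iff order.refl order_le_less strict_mono_onD)

lemma classK_pos: "classK f \<Longrightarrow> 0 < x \<Longrightarrow> 0 < f x"
  unfolding classK_def by (metis atLeast_iff less_imp_le order.refl strict_mono_onD)

lemma classK_strict: "classK f \<Longrightarrow> 0 \<le> x \<Longrightarrow> x < y \<Longrightarrow> f x < f y"
  unfolding classK_def by (metis atLeast_iff order.trans less_imp_le strict_mono_onD)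

lemma classK_mono: "classK f \<Longrightarrow> 0 \<le> x \<Longrightarrow> x \<le> y \<Longrightarrow> f x \<le> f y"
  using classK_strict[of f x y] by (cases "x = y") auto

lemma classK_continuous_on: "classK f \<Longrightarrow> continuous_on {0..} f"
  unfolding classK_def by blast

lemma classK_zero: "classK f \<Longrightarrow> f 0 = 0"
  unfolding classK_def by blast

lemma classKinf_imp_classK: "classKinf f \<Longrightarrow> classK f"
  unfolding classKinf_def by blast

lemma classKI:
  assumes "continuous_on {0..} f" "f 0 = 0" "\<And>x y. 0 \<le> x \<Longrightarrow> x < y \<Longrightarrow> f x < f y"
  shows "classK f"
  unfolding classK_def using assms by (auto intro: strict_mono_onI)

lemma classKinfI:
  assumes "classK f" "\<And>Z. \<exists>N. \<forall>x\<ge>N. Z \<le> f x"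
  shows "classKinf f"
  unfolding classKinf_def filterlim_at_top eventually_at_top_linorder using assms by blast

lemma classKinfE:
  assumes "classKinf f"
  obtains N where "\<And>x. N \<le> x \<Longrightarrow> Z \<le> f x"
  using assms unfolding classKinf_def filterlim_at_top eventually_at_top_linorder by blast

lemma classK_compose:
  assumes f: "classK f" and g: "classK g"
  shows "classK (\<lambda>x. f (g x))"
proof (rule classKI)
  show "continuous_on {0..} (\<lambda>x. f (g x))"
    by (rule continuous_on_compose2[OF classK_continuous_on[OF f] classK_continuous_on[OF g]])
       (auto intro: classK_nonneg[OF g])
  show "f (g 0) = 0" by (simp add: classK_zero[OF f] classK_zero[OF g])
  fix x y :: real assume "0 \<le> x" "x < y"
  then show "f (g x) < f (g y)"
    by (intro classK_strict[OF f] classK_strict[OF g] classK_nonneg[OF g])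
qed

lemma classKinf_compose:
  assumes f: "classKinf f" and g: "classKinf g"
  shows "classKinf (\<lambda>x. f (g x))"
proof (rule classKinfI)
  show "classK (\<lambda>x. f (g x))"
    using classK_compose[OF classKinf_imp_classK[OF f] classKinf_imp_classK[OF g]] .
  fix Z
  obtain N1 where "\<And>x. N1 \<le> x \<Longrightarrow> Z \<le> f x" using classKinfE[OF f] by blast
  moreover obtain N2 where "\<And>x. N2 \<le> x \<Longrightarrow> N1 \<le> g x" using classKinfE[OF g] by blast
  ultimately show "\<exists>N. \<forall>x\<ge>N. Z \<le> f (g x)" by blast
qed

lemma classK_cmult:
  assumes c: "0 < c" and f: "classK f"
  shows "classK (\<lambda>x. c * f x)"
proof (rule classKI)
  show "continuous_on {0..} (\<lambda>x. c * f x)"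
    using classK_continuous_on[OF f] by (intro continuous_intros)
  show "c * f 0 = 0" by (simp add: classK_zero[OF f])
  fix x y :: real assume "0 \<le> x" "x < y"
  then show "c * f x < c * f y" using c classK_strict[OF f] by simp
qed

lemma classKinf_min:
  assumes f: "classKinf f" and g: "classKinf g"
  shows "classKinf (\<lambda>x. min (f x) (g x))"
proof (rule classKinfI)
  have fK: "classK f" and gK: "classK g" using f g by (auto dest: classKinf_imp_classK)
  show "classK (\<lambda>x. min (f x) (g x))"
  proof (rule classKI)
    fix x y :: real assume "0 \<le> x" "x < y"
    then show "min (f x) (g x) < min (f y) (g y)"
      using classK_strict[OF fK] classK_strict[OF gK] by (smt (verit))
  qed (use classK_zero[OF fK] classK_zero[OF gK] in \<open>auto intro: continuous_on_min classK_continuous_on fK gK\<close>)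
  fix Z
  obtain N1 where "\<And>x. N1 \<le> x \<Longrightarrow> Z \<le> f x" using classKinfE[OF f] by blast
  moreover obtain N2 where "\<And>x. N2 \<le> x \<Longrightarrow> Z \<le> g x" using classKinfE[OF g] by blast
  ultimately show "\<exists>N. \<forall>x\<ge>N. Z \<le> min (f x) (g x)" by (intro exI[of _ "max N1 N2"]) auto
qed

lemma classKinf_add:
  assumes f: "classKinf f" and g: "classKinf g"
  shows "classKinf (\<lambda>x. f x + g x)"
proof (rule classKinfI)
  have fK: "classK f" and gK: "classK g" using f g by (auto dest: classKinf_imp_classK)
  show "classK (\<lambda>x. f x + g x)"
  proof (rule classKI)
    fix x y :: real assume "0 \<le> x" "x < y"
    then show "f x + g x < f y + g y"
      using classK_strict[OF fK] classK_strict[OF gK] by (smt (verit))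
  qed (use classK_zero[OF fK] classK_zero[OF gK] in \<open>auto intro: continuous_on_add classK_continuous_on fK gK\<close>)
  fix Z
  obtain N where "\<And>x. N \<le> x \<Longrightarrow> Z \<le> f x" using classKinfE[OF f] by blast
  then show "\<exists>N. \<forall>x\<ge>N. Z \<le> f x + g x"
    using classK_nonneg[OF gK] by (intro exI[of _ "max N 0"]) (smt (verit))
qed

lemma classKinf_divide:
  assumes "0 < c" shows "classKinf (\<lambda>x::real. x / c)"
proof (rule classKinfI)
  show "classK (\<lambda>x::real. x / c)"
    using assms by (intro classKI) (auto intro!: continuous_intros divide_strict_right_mono)
  show "\<exists>N. \<forall>x\<ge>N. Z \<le> x / c" for Z
    using assms by (intro exI[of _ "c * Z"]) (auto simp: pos_le_divide_eq mult.commute)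
qed

lemma classK_inverse_continuous_on:
  assumes \<alpha>: "classK \<alpha>" and \<beta>\<alpha>: "\<And>s. 0 \<le> s \<Longrightarrow> \<beta> (\<alpha> s) = s"
    and \<alpha>\<beta>: "\<And>w. 0 \<le> w \<Longrightarrow> \<alpha> (\<beta> w) = w" and \<beta>_nonneg: "\<And>w. 0 \<le> w \<Longrightarrow> 0 \<le> \<beta> w"
  shows "continuous_on {0..} \<beta>"
  unfolding continuous_on_eq_continuous_within
proof
  fix w :: real assume w: "w \<in> {0..}"
  define n where "n = \<beta> (w + 1)"
  have n: "0 \<le> n" "\<alpha> n = w + 1" using \<alpha>\<beta> \<beta>_nonneg w by (auto simp: n_def)
  have "\<alpha> ` {0..n} = {0..\<alpha> n}"
  proof
    show "\<alpha> ` {0..n} \<subseteq> {0..\<alpha> n}"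
      using classK_nonneg[OF \<alpha>] classK_mono[OF \<alpha>] by auto
    show "{0..\<alpha> n} \<subseteq> \<alpha> ` {0..n}"
    proof
      fix v assume v: "v \<in> {0..\<alpha> n}"
      have "\<beta> v \<le> n"
      proof (rule ccontr)
        assume "\<not> \<beta> v \<le> n"
        then have "\<alpha> n < \<alpha> (\<beta> v)" using classK_strict[OF \<alpha> n(1)] by simp
        then show False using v \<alpha>\<beta>[of v] by simp
      qed
      moreover have "0 \<le> v" using v by simp
      ultimately show "v \<in> \<alpha> ` {0..n}"
        using \<alpha>\<beta>[of v] \<beta>_nonneg[of v] by (intro image_eqI[of _ _ "\<beta> v"]) auto
    qed
  qed
  moreover have "continuous_on (\<alpha> ` {0..n}) \<beta>"
    by (rule continuous_on_inv)
       (use continuous_on_subset[OF classK_continuous_on[OF \<alpha>], of "{0..n}"] \<beta>\<alpha> in auto)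
  ultimately have "continuous (at w within {0..\<alpha> n}) \<beta>"
    using w n by (auto simp: continuous_on_eq_continuous_within)
  moreover have "at w within {0..} = at w within {0..\<alpha> n}"
    by (rule at_within_nhd[where S="{..<\<alpha> n}"]) (use n in auto)
  ultimately show "continuous (at w within {0..}) \<beta>" by simp
qed

lemma classKinf_inverse:
  assumes a: "classKinf \<alpha>"
  obtains \<beta> where "classKinf \<beta>" "\<And>s. 0 \<le> s \<Longrightarrow> \<beta> (\<alpha> s) = s"
    "\<And>w. 0 \<le> w \<Longrightarrow> \<alpha> (\<beta> w) = w"
proof -
  have aK: "classK \<alpha>" using a by (rule classKinf_imp_classK)
  have inj: "inj_on \<alpha> {0..}"
    using aK by (auto simp: classK_def intro: strict_mono_on_imp_inj_on)
  have onto: "\<alpha> ` {0..} = {0..}"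
  proof
    show "\<alpha> ` {0..} \<subseteq> {0..}" using classK_nonneg[OF aK] by auto
    show "{0..} \<subseteq> \<alpha> ` {0..}"
    proof
      fix w :: real assume w: "w \<in> {0..}"
      obtain N where "\<And>x. N \<le> x \<Longrightarrow> w \<le> \<alpha> x" using classKinfE[OF a] by blast
      then have "w \<le> \<alpha> (max N 0)" by simp
      then show "w \<in> \<alpha> ` {0..}"
        using IVT'[of \<alpha> 0 w "max N 0"] w classK_zero[OF aK]
          continuous_on_subset[OF classK_continuous_on[OF aK]] by force
    qed
  qed
  define \<beta> where "\<beta> = the_inv_into {0..} \<alpha>"
  have \<beta>\<alpha>: "\<beta> (\<alpha> s) = s" if "0 \<le> s" for s
    unfolding \<beta>_def using the_inv_into_f_f[OF inj] that by auto
  have \<alpha>\<beta>: "\<alpha> (\<beta> w) = w" and \<beta>_nonneg: "0 \<le> \<beta> w" if "0 \<le> w" for w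
    unfolding \<beta>_def using f_the_inv_into_f[OF inj] the_inv_into_into[OF inj] onto that by auto
  have \<beta>_strict: "\<beta> x < \<beta> y" if "0 \<le> x" "x < y" for x y
    using classK_mono[OF aK \<beta>_nonneg, of y "\<beta> x"] \<alpha>\<beta> that by force
  have "continuous_on {0..} \<beta>"
    by (rule classK_inverse_continuous_on[OF aK \<beta>\<alpha> \<alpha>\<beta> \<beta>_nonneg])
  moreover have "\<exists>N. \<forall>x\<ge>N. Z \<le> \<beta> x" for Z
    using \<beta>_strict \<beta>\<alpha> classK_nonneg[OF aK]
    by (intro exI[of _ "\<alpha> (max Z 0)"] allI impI) (smt (verit) max.cobounded2)
  ultimately have "classKinf \<beta>"
    using \<beta>\<alpha>[of 0] classK_zero[OF aK] \<beta>_strict by (intro classKinfI classKI) auto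
  then show thesis using that \<beta>\<alpha> \<alpha>\<beta> by blast
qed

lemma classK_min_half_le_add:
  assumes f: "classK f" and g: "classK g"
    and "0 \<le> r" "0 \<le> x" "0 \<le> y" "r \<le> x + y"
  shows "min (f (r / 2)) (g (r / 2)) \<le> f x + g y"
proof (cases "y \<le> x")
  case True
  then have "f (r / 2) \<le> f x" using assms by (intro classK_mono[OF f]) auto
  then show ?thesis using classK_nonneg[OF g \<open>0 \<le> y\<close>] by linarith
next
  case False
  then have "g (r / 2) \<le> g y" using assms by (intro classK_mono[OF g]) auto
  then show ?thesis using classK_nonneg[OF f \<open>0 \<le> x\<close>] by linarith
qed

lemma classKinf_sandwich_add:
  fixes f :: "'a::real_normed_vector \<Rightarrow> real" and g :: "'b::real_normed_vector \<Rightarrow> real"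
  assumes lf: "classKinf lf" and uf: "classKinf uf" and lg: "classKinf lg" and ug: "classKinf ug"
    and f: "\<And>x. lf (norm x) \<le> f x \<and> f x \<le> uf (norm x)"
    and g: "\<And>y. lg (norm y) \<le> g y \<and> g y \<le> ug (norm y)"
  shows "\<exists>al au. classKinf al \<and> classKinf au \<and>
    (\<forall>x y. al (norm (x, y)) \<le> g y + f x \<and> g y + f x \<le> au (norm (x, y)))"
proof (intro exI conjI allI)
  have half: "classKinf (\<lambda>r::real. r / 2)" by (rule classKinf_divide) simp
  show "classKinf (\<lambda>r. min (lf (r / 2)) (lg (r / 2)))"
    by (rule classKinf_min[OF classKinf_compose[OF lf half] classKinf_compose[OF lg half]])
  show "classKinf (\<lambda>r. uf r + ug r)" by (rule classKinf_add[OF uf ug])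
  fix x :: 'a and y :: 'b
  have "min (lf (norm (x, y) / 2)) (lg (norm (x, y) / 2)) \<le> lf (norm x) + lg (norm y)"
    using norm_Pair_le[of x y] classKinf_imp_classK[OF lf] classKinf_imp_classK[OF lg]
    by (intro classK_min_half_le_add) auto
  then show "min (lf (norm (x, y) / 2)) (lg (norm (x, y) / 2)) \<le> g y + f x"
    using f[of x] g[of y] by linarith
  have "uf (norm x) \<le> uf (norm (x, y))" "ug (norm y) \<le> ug (norm (x, y))"
    using norm_fst_le norm_snd_le
    by (auto intro!: classK_mono[OF classKinf_imp_classK[OF uf]] classK_mono[OF classKinf_imp_classK[OF ug]])
  then show "g y + f x \<le> uf (norm (x, y)) + ug (norm (x, y))"
    using f[of x] g[of y] by linarith
qed

section \<open>Weights and their primitives\<close>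

definition weight :: "(real \<Rightarrow> real) \<Rightarrow> bool" where
  "weight \<nu> \<longleftrightarrow> continuous_on {0..} \<nu> \<and> mono_on {0..} \<nu> \<and> (\<forall>s\<ge>0. 0 \<le> \<nu> s)"

lemma weight_continuous_on: "weight \<nu> \<Longrightarrow> continuous_on {0..} \<nu>"
  unfolding weight_def by blast

lemma weight_mono: "weight \<nu> \<Longrightarrow> 0 \<le> x \<Longrightarrow> x \<le> y \<Longrightarrow> \<nu> x \<le> \<nu> y"
  unfolding weight_def using mono_onD[of "{0..}" \<nu> x y] by simp

lemma weight_nonneg: "weight \<nu> \<Longrightarrow> 0 \<le> x \<Longrightarrow> 0 \<le> \<nu> x"
  unfolding weight_def by blast

lemma weight_compose_classK:
  assumes \<nu>: "weight \<nu>" and \<alpha>: "classK \<alpha>"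
  shows "weight (\<lambda>s. \<nu> (\<alpha> s))"
  unfolding weight_def
proof (intro conjI allI impI mono_onI)
  show "continuous_on {0..} (\<lambda>s. \<nu> (\<alpha> s))"
    by (rule continuous_on_compose2[OF weight_continuous_on[OF \<nu>] classK_continuous_on[OF \<alpha>]])
       (auto intro: classK_nonneg[OF \<alpha>])
qed (auto intro: weight_mono[OF \<nu>] weight_nonneg[OF \<nu>] classK_nonneg[OF \<alpha>] classK_mono[OF \<alpha>])

lemma weight_add_const: "weight \<nu> \<Longrightarrow> 0 \<le> c \<Longrightarrow> weight (\<lambda>s. c + \<nu> s)"
  unfolding weight_def mono_on_def by (auto intro!: continuous_intros add_nonneg_nonneg)

lemma classK_mult_weight:
  assumes f: "classK f" and w: "weight w" and pos: "\<And>s. 0 < s \<Longrightarrow> 0 < w s"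
  shows "classK (\<lambda>s. f s * w s)"
proof (rule classKI)
  show "continuous_on {0..} (\<lambda>s. f s * w s)"
    by (intro continuous_on_mult classK_continuous_on[OF f] weight_continuous_on[OF w])
  show "f 0 * w 0 = 0" by (simp add: classK_zero[OF f])
  fix x y :: real assume xy: "0 \<le> x" "x < y"
  have "f x * w x \<le> f x * w y"
    using xy by (intro mult_left_mono weight_mono[OF w] classK_nonneg[OF f]) auto
  also have "\<dots> < f y * w y"
    using xy classK_strict[OF f xy] pos[of y] by (intro mult_strict_right_mono) auto
  finally show "f x * w x < f y * w y" .
qed

lemma classKinf_mult_weight:
  assumes f: "classKinf f" and w: "weight w" and pos: "\<And>s. 0 < s \<Longrightarrow> 0 < w s"
  shows "classKinf (\<lambda>s. f s * w s)"
proof (rule classKinfI)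
  show "classK (\<lambda>s. f s * w s)"
    using classK_mult_weight[OF classKinf_imp_classK[OF f] w pos] .
  fix Z
  obtain N where N: "\<And>x. N \<le> x \<Longrightarrow> Z / w 1 \<le> f x" using classKinfE[OF f] by blast
  show "\<exists>N. \<forall>x\<ge>N. Z \<le> f x * w x"
  proof (intro exI[of _ "max N 1"] allI impI)
    fix x assume x: "max N 1 \<le> x"
    have w1: "0 < w 1" "w 1 \<le> w x" using pos x by (auto intro: weight_mono[OF w])
    have fx: "0 \<le> f x" using x by (intro classK_nonneg[OF classKinf_imp_classK[OF f]]) auto
    have "Z \<le> f x * w 1" using N[of x] x w1 by (simp add: pos_divide_le_eq)
    also have "\<dots> \<le> f x * w x" using w1 fx by (intro mult_left_mono)
    finally show "Z \<le> f x * w x" .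
  qed
qed

lemma weight_gain_split:
  assumes \<nu>: "weight \<nu>" and \<rho>: "classK \<rho>" and "0 \<le> v" "0 \<le> w" "0 \<le> t" "\<rho> t = 2 * w"
  shows "\<nu> v * w \<le> \<nu> v * \<rho> v / 2 + w * \<nu> t"
proof (cases "\<rho> v < 2 * w")
  case True
  have "v \<le> t"
  proof (rule ccontr)
    assume "\<not> v \<le> t"
    then have "\<rho> t \<le> \<rho> v" using classK_mono[OF \<rho> \<open>0 \<le> t\<close>] by simp
    then show False using True \<open>\<rho> t = 2 * w\<close> by simp
  qed
  then have "\<nu> v * w \<le> \<nu> t * w"
    using \<open>0 \<le> w\<close> by (intro mult_right_mono weight_mono[OF \<nu> \<open>0 \<le> v\<close>])
  moreover have "0 \<le> \<nu> v * \<rho> v / 2"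
    using weight_nonneg[OF \<nu> \<open>0 \<le> v\<close>] classK_nonneg[OF \<rho> \<open>0 \<le> v\<close>] by simp
  ultimately show ?thesis by (simp add: mult.commute)
next
  case False
  then have "\<nu> v * w \<le> \<nu> v * (\<rho> v / 2)"
    by (intro mult_left_mono weight_nonneg[OF \<nu> \<open>0 \<le> v\<close>]) simp
  moreover have "0 \<le> w * \<nu> t"
    using \<open>0 \<le> w\<close> weight_nonneg[OF \<nu> \<open>0 \<le> t\<close>] by simp
  ultimately show ?thesis by simp
qed

lemma weight_dominating_ratio_exists:
  assumes \<gamma>: "classK \<gamma>" and \<rho>: "classK \<rho>" and "0 \<le> c"
    and bounded: "\<exists>M>0. eventually (\<lambda>s. \<gamma> s / \<rho> s \<le> M) (at_right 0)"
  shows "\<exists>\<nu>. weight \<nu> \<and> (\<forall>s>0. c * (\<gamma> s / \<rho> s) \<le> \<nu> s)"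
proof -
  obtain M \<delta> where "0 < M" "0 < \<delta>" and M: "\<And>s. 0 < s \<Longrightarrow> s < \<delta> \<Longrightarrow> \<gamma> s / \<rho> s \<le> M"
    using bounded unfolding eventually_at_right_field by blast
  have \<rho>\<delta>: "0 < \<rho> \<delta>" using classK_pos[OF \<rho> \<open>0 < \<delta>\<close>] .
  \<comment> \<open>Below \<open>\<delta>\<close> the ratio is at most \<open>M\<close>; above \<open>\<delta>\<close> its denominator is at least \<open>\<rho> \<delta>\<close>.\<close>
  define \<nu> where "\<nu> s = c * (M + \<gamma> s / \<rho> \<delta>)" for s
  have "continuous_on {0..} \<nu>"
    unfolding \<nu>_def using \<rho>\<delta> by (intro continuous_intros classK_continuous_on[OF \<gamma>]) auto
  moreover have "mono_on {0..} \<nu>"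
  proof (rule mono_onI)
    fix x y :: real assume "x \<in> {0..}" "x \<le> y"
    then show "\<nu> x \<le> \<nu> y"
      unfolding \<nu>_def using \<open>0 \<le> c\<close> \<rho>\<delta>
      by (intro mult_left_mono add_left_mono divide_right_mono classK_mono[OF \<gamma>]) auto
  qed
  moreover have "0 \<le> \<nu> s" if "0 \<le> s" for s
    unfolding \<nu>_def using \<open>0 \<le> c\<close> \<open>0 < M\<close> \<rho>\<delta> classK_nonneg[OF \<gamma> that] by simp
  ultimately have "weight \<nu>" unfolding weight_def by blast
  moreover have "c * (\<gamma> s / \<rho> s) \<le> \<nu> s" if s: "0 < s" for s
  proof -
    have "\<gamma> s / \<rho> s \<le> M + \<gamma> s / \<rho> \<delta>"
    proof (cases "s < \<delta>")
      case True
      moreover have "0 \<le> \<gamma> s / \<rho> \<delta>" using classK_nonneg[OF \<gamma>, of s] \<rho>\<delta> s by simp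
      ultimately show ?thesis using M[OF s] by linarith
    next
      case False
      then have "\<gamma> s / \<rho> s \<le> \<gamma> s / \<rho> \<delta>"
        using s \<rho>\<delta> classK_mono[OF \<rho>, of \<delta> s] classK_nonneg[OF \<gamma>, of s] \<open>0 < \<delta>\<close>
        by (intro divide_left_mono) auto
      then show ?thesis using \<open>0 < M\<close> by linarith
    qed
    then show ?thesis unfolding \<nu>_def using \<open>0 \<le> c\<close> by (rule mult_left_mono)
  qed
  ultimately show ?thesis by blast
qed

lemma dominating_weight_pos:
  assumes "classK \<gamma>" "classK \<rho>" "0 < c" "\<And>s. 0 < s \<Longrightarrow> c * (\<gamma> s / \<rho> s) \<le> \<nu> s" "0 < s"
  shows "0 < \<nu> s"
  using assms(4)[OF assms(5)] classK_pos[OF assms(1,5)] classK_pos[OF assms(2,5)] assms(3)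
  by (smt (verit) divide_pos_pos mult_pos_pos)

lemma dominating_weight_ratio:
  assumes \<gamma>: "classK \<gamma>" and \<rho>: "classK \<rho>" and dom: "\<And>s. 0 < s \<Longrightarrow> c * (\<gamma> s / \<rho> s) \<le> \<nu> s"
    and "0 \<le> s"
  shows "c * \<gamma> s \<le> \<nu> s * \<rho> s"
proof (cases "s = 0")
  case False
  then have "0 < s" "0 < \<rho> s" using classK_pos[OF \<rho>] \<open>0 \<le> s\<close> by auto
  then show ?thesis using dom[of s] by (simp add: pos_divide_le_eq)
qed (simp add: classK_zero[OF \<gamma>] classK_zero[OF \<rho>])

definition weight_ext :: "(real \<Rightarrow> real) \<Rightarrow> real \<Rightarrow> real" where
  "weight_ext \<nu> s = \<nu> (max s 0)"

text \<open>Extending \<open>\<nu>\<close> constantly to the left makes its primitive differentiable on the open set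
  \<open>{-1<..}\<close>, which contains all values of a nonnegative function.\<close>

definition weight_primitive :: "(real \<Rightarrow> real) \<Rightarrow> real \<Rightarrow> real" where
  "weight_primitive \<nu> s = integral {-1..s} (weight_ext \<nu>) - \<nu> 0"

lemma continuous_weight_ext: "weight \<nu> \<Longrightarrow> continuous_on UNIV (weight_ext \<nu>)"
  unfolding weight_ext_def[abs_def]
  by (rule continuous_on_compose2[OF weight_continuous_on]) (auto intro!: continuous_intros)

lemma weight_ext_eq [simp]: "0 \<le> s \<Longrightarrow> weight_ext \<nu> s = \<nu> s"
  unfolding weight_ext_def by simp

lemma weight_primitive_deriv:
  assumes \<nu>: "weight \<nu>" and s: "-1 < s"
  shows "(weight_primitive \<nu> has_real_derivative weight_ext \<nu> s) (at s)"
proof -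
  have "((\<lambda>u. integral {-1..u} (weight_ext \<nu>)) has_vector_derivative weight_ext \<nu> s)
          (at s within {-1..s+1})"
    using s continuous_on_subset[OF continuous_weight_ext[OF \<nu>]]
    by (intro integral_has_vector_derivative) auto
  moreover have "at s within {-1..s+1} = at s"
    using s by (intro at_within_interior) auto
  ultimately show ?thesis
    unfolding weight_primitive_def[abs_def] has_real_derivative_iff_has_vector_derivative[symmetric]
    by (auto intro!: derivative_eq_intros)
qed

lemma weight_primitive_eq_integral:
  assumes \<nu>: "weight \<nu>" and s: "0 \<le> s"
  shows "weight_primitive \<nu> s = integral {0..s} \<nu>"
proof -
  have "weight_ext \<nu> integrable_on {-1..s}"
    using continuous_weight_ext[OF \<nu>] continuous_on_subset integrable_continuous_real by blast
  then have "integral {-1..s} (weight_ext \<nu>)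
      = integral {-1..0} (weight_ext \<nu>) + integral {0..s} (weight_ext \<nu>)"
    using s by (simp add: Henstock_Kurzweil_Integration.integral_combine)
  also have "integral {-1..0} (weight_ext \<nu>) = integral {-1..0} (\<lambda>_::real. \<nu> 0)"
    by (rule integral_cong) (auto simp: weight_ext_def)
  also have "integral {0..s} (weight_ext \<nu>) = integral {0..s} \<nu>"
    by (rule integral_cong) simp
  finally show ?thesis unfolding weight_primitive_def by simp
qed

lemma weight_primitive_mvt:
  assumes \<nu>: "weight \<nu>" and "0 \<le> x" "x < y"
  obtains z where "x < z" "z < y" "weight_primitive \<nu> y - weight_primitive \<nu> x = (y - x) * \<nu> z"
proof -
  have "(weight_primitive \<nu> has_real_derivative weight_ext \<nu> t) (at t)" if "x \<le> t" for t
    using assms that by (intro weight_primitive_deriv) auto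
  then obtain z where z: "x < z" "z < y"
    "weight_primitive \<nu> y - weight_primitive \<nu> x = (y - x) * weight_ext \<nu> z"
    using MVT2[OF \<open>x < y\<close>, of "weight_primitive \<nu>" "weight_ext \<nu>"] by blast
  moreover have "0 \<le> z" using z(1) \<open>0 \<le> x\<close> by simp
  ultimately show thesis using that by simp
qed

lemma classKinf_integral_weight:
  assumes \<nu>: "weight \<nu>" and pos: "\<And>s. 0 < s \<Longrightarrow> 0 < \<nu> s"
  shows "classKinf (\<lambda>s. integral {0..s} \<nu>)"
proof (rule classKinfI)
  let ?G = "weight_primitive \<nu>"
  have G_eq: "?G s = integral {0..s} \<nu>" if "0 \<le> s" for s
    using weight_primitive_eq_integral[OF \<nu> that] .
  have "isCont ?G s" if "0 \<le> s" for s
    using DERIV_isCont[OF weight_primitive_deriv[OF \<nu>]] that by simp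
  then have "continuous_on {0..} ?G" by (intro continuous_at_imp_continuous_on) auto
  show "classK (\<lambda>s. integral {0..s} \<nu>)"
  proof (rule classKI)
    show "continuous_on {0..} (\<lambda>s. integral {0..s} \<nu>)"
      using \<open>continuous_on {0..} ?G\<close> by (rule continuous_on_eq) (simp add: G_eq)
    fix x y :: real assume xy: "0 \<le> x" "x < y"
    then obtain z where z: "x < z" "?G y - ?G x = (y - x) * \<nu> z"
      using weight_primitive_mvt[OF \<nu>] by metis
    then have "0 < (y - x) * \<nu> z" using xy pos[of z] by simp
    then show "integral {0..x} \<nu> < integral {0..y} \<nu>" using xy z(2) G_eq[of x] G_eq[of y] by simp
  qed simp
  fix Z
  show "\<exists>N. \<forall>x\<ge>N. Z \<le> integral {0..x} \<nu>"
  proof (intro exI[of _ "max 2 (1 + (Z - ?G 1) / \<nu> 1)"] allI impI)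
    fix x assume x: "max 2 (1 + (Z - ?G 1) / \<nu> 1) \<le> x"
    obtain z where z: "1 < z" "?G x - ?G 1 = (x - 1) * \<nu> z"
      using weight_primitive_mvt[OF \<nu>, of 1 x] x by auto
    have "(x - 1) * \<nu> 1 \<le> (x - 1) * \<nu> z"
      using z x by (intro mult_left_mono weight_mono[OF \<nu>]) auto
    moreover have "(Z - ?G 1) / \<nu> 1 \<le> x - 1" using x by simp
    then have "Z - ?G 1 \<le> (x - 1) * \<nu> 1" using pos[of 1] by (simp add: pos_divide_le_eq)
    moreover have "?G x = integral {0..x} \<nu>" using x by (intro G_eq) simp
    ultimately show "Z \<le> integral {0..x} \<nu>" using z(2) by linarith
  qed
qed

section \<open>Clarke gradient of the cascade Lyapunov function\<close>

lemma loc_lipschitz_isCont: "loc_lipschitz V \<Longrightarrow> isCont V x"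
  unfolding loc_lipschitz_def
  by (metis centre_in_ball continuous_on_interior interior_ball lipschitz_on_continuous_on)

lemma has_derivative_norm_le_lipschitz:
  fixes f :: "'a::real_inner \<Rightarrow> real"
  assumes der: "(f has_derivative (\<lambda>h. inner q h)) (at y)"
    and e: "0 < e" and lip: "L-lipschitz_on (ball y e) f"
  shows "norm q \<le> L"
proof -
  have L: "0 \<le> L" using lipschitz_on_nonneg[OF lip] .
  have "((\<lambda>t. y + t *\<^sub>R q) has_derivative (\<lambda>t. t *\<^sub>R q)) (at 0)"
    by (auto intro!: derivative_eq_intros)
  moreover have "(f has_derivative (\<lambda>h. inner q h)) (at (y + 0 *\<^sub>R q))" using der by simp
  ultimately have "((\<lambda>t. f (y + t *\<^sub>R q)) has_derivative (\<lambda>t. inner q (t *\<^sub>R q))) (at 0)"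
    by (rule has_derivative_compose)
  moreover have "(\<lambda>t. inner q (t *\<^sub>R q)) = (*) (inner q q)" by (auto simp: mult.commute)
  ultimately have "((\<lambda>t. f (y + t *\<^sub>R q)) has_real_derivative inner q q) (at 0)"
    by (simp add: has_field_derivative_def)
  then have quot: "((\<lambda>t. (f (y + t *\<^sub>R q) - f y) / t) \<longlongrightarrow> inner q q) (at 0)"
    by (simp add: DERIV_def)
  define d where "d = e / (norm q + 1)"
  have d: "0 < d" unfolding d_def using e by (smt (verit) divide_pos_pos norm_ge_zero)
  have "(f (y + t *\<^sub>R q) - f y) / t \<le> L * norm q" if t: "t \<noteq> 0" "\<bar>t\<bar> < d" for t
  proof -
    have "\<bar>t\<bar> * norm q < e"
      using t e by (simp add: d_def less_divide_eq) (smt (verit, best) mult_left_mono norm_ge_zero)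
    then have "y + t *\<^sub>R q \<in> ball y e" by (simp add: dist_norm)
    then have lip_t: "\<bar>f (y + t *\<^sub>R q) - f y\<bar> \<le> L * (\<bar>t\<bar> * norm q)"
      using lipschitz_onD[OF lip, of "y + t *\<^sub>R q" y] e by (simp add: dist_norm dist_real_def)
    have "(f (y + t *\<^sub>R q) - f y) / t \<le> \<bar>f (y + t *\<^sub>R q) - f y\<bar> / \<bar>t\<bar>"
      by (metis abs_divide abs_ge_self)
    also have "\<dots> \<le> L * norm q"
      using lip_t t by (simp add: pos_divide_le_eq mult_ac)
    finally show ?thesis .
  qed
  then have "\<forall>\<^sub>F t in at 0. (f (y + t *\<^sub>R q) - f y) / t \<le> L * norm q"
    unfolding eventually_at using d by (auto simp: dist_real_def)
  then have "norm q * norm q \<le> L * norm q"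
    using tendsto_upperbound[OF quot] by (simp add: power2_norm_eq_inner[symmetric] power2_eq_square)
  then show ?thesis using L by (cases "q = 0") (auto simp: mult_le_cancel_right)
qed

lemma has_derivative_sum_split:
  fixes P :: "'b::real_inner \<Rightarrow> real" and Q :: "'a::real_inner \<Rightarrow> real"
  assumes D: "((\<lambda>(x, y). P y + Q x) has_derivative (\<lambda>h. inner g h)) (at (x1, x2))"
  shows "(Q has_derivative (\<lambda>h. inner (fst g) h)) (at x1)"
    and "(P has_derivative (\<lambda>h. inner (snd g) h)) (at x2)"
proof -
  have "((\<lambda>x. (x, x2)) has_derivative (\<lambda>h. (h, 0))) (at x1)"
    by (auto intro!: derivative_eq_intros)
  from has_derivative_compose[OF this D]
  have "((\<lambda>x. Q x + P x2) has_derivative (\<lambda>h. inner (fst g) h)) (at x1)"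
    by (simp add: inner_prod_def add.commute)
  from has_derivative_diff[OF this has_derivative_const[of "P x2"]]
  show "(Q has_derivative (\<lambda>h. inner (fst g) h)) (at x1)" by simp
  have "((\<lambda>y. (x1, y)) has_derivative (\<lambda>h. (0, h))) (at x2)"
    by (auto intro!: derivative_eq_intros)
  from has_derivative_compose[OF this D]
  have "((\<lambda>y. P y + Q x1) has_derivative (\<lambda>h. inner (snd g) h)) (at x2)"
    by (simp add: inner_prod_def)
  from has_derivative_diff[OF this has_derivative_const[of "Q x1"]]
  show "(P has_derivative (\<lambda>h. inner (snd g) h)) (at x2)" by simp
qed

lemma abs_cont_on_compose_nonexpansive:
  assumes \<phi>: "abs_cont_on S \<phi>" and f: "\<And>u v. norm (f u - f v) \<le> norm (u - v)"
  shows "abs_cont_on S (\<lambda>t. f (\<phi> t))"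
  unfolding abs_cont_on_def
proof (intro allI impI)
  fix \<epsilon> :: real assume "0 < \<epsilon>"
  then obtain \<delta> where "0 < \<delta>" and \<delta>: "\<And>(I::nat set) lo hi.
      finite I \<and> (\<forall>i\<in>I. lo i \<le> hi i \<and> lo i \<in> S \<and> hi i \<in> S) \<and>
      (\<forall>i\<in>I. \<forall>j\<in>I. i \<noteq> j \<longrightarrow> {lo i<..<hi i} \<inter> {lo j<..<hi j} = {}) \<and>
      (\<Sum>i\<in>I. hi i - lo i) < \<delta> \<Longrightarrow> (\<Sum>i\<in>I. norm (\<phi> (hi i) - \<phi> (lo i))) < \<epsilon>"
    using \<phi> unfolding abs_cont_on_def by blast
  show "\<exists>\<delta>>0. \<forall>(I::nat set) lo hi.
      finite I \<and> (\<forall>i\<in>I. lo i \<le> hi i \<and> lo i \<in> S \<and> hi i \<in> S) \<and>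
      (\<forall>i\<in>I. \<forall>j\<in>I. i \<noteq> j \<longrightarrow> {lo i<..<hi i} \<inter> {lo j<..<hi j} = {}) \<and>
      (\<Sum>i\<in>I. hi i - lo i) < \<delta> \<longrightarrow> (\<Sum>i\<in>I. norm (f (\<phi> (hi i)) - f (\<phi> (lo i)))) < \<epsilon>"
  proof (intro exI[of _ \<delta>] conjI allI impI \<open>0 < \<delta>\<close>)
    fix I :: "nat set" and lo hi
    assume I: "finite I \<and> (\<forall>i\<in>I. lo i \<le> hi i \<and> lo i \<in> S \<and> hi i \<in> S) \<and>
      (\<forall>i\<in>I. \<forall>j\<in>I. i \<noteq> j \<longrightarrow> {lo i<..<hi i} \<inter> {lo j<..<hi j} = {}) \<and>
      (\<Sum>i\<in>I. hi i - lo i) < \<delta>"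
    have "(\<Sum>i\<in>I. norm (f (\<phi> (hi i)) - f (\<phi> (lo i)))) \<le> (\<Sum>i\<in>I. norm (\<phi> (hi i) - \<phi> (lo i)))"
      by (intro sum_mono f)
    also have "\<dots> < \<epsilon>" using \<delta>[OF I] .
    finally show "(\<Sum>i\<in>I. norm (f (\<phi> (hi i)) - f (\<phi> (lo i)))) < \<epsilon>" .
  qed
qed

lemma abs_cont_on_fst_snd:
  fixes \<phi> :: "real \<Rightarrow> 'a::real_normed_vector \<times> 'b::real_normed_vector"
  assumes "abs_cont_on S \<phi>"
  shows "abs_cont_on S (\<lambda>t. fst (\<phi> t))" "abs_cont_on S (\<lambda>t. snd (\<phi> t))"
proof -
  have "norm (fst w) \<le> norm w" "norm (snd w) \<le> norm w" for w :: "'a \<times> 'b"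
    using norm_fst_le[of "fst w" "snd w"] norm_snd_le[of "snd w" "fst w"] by simp_all
  then have "norm (fst u - fst v) \<le> norm (u - v)" "norm (snd u - snd v) \<le> norm (u - v)"
    for u v :: "'a \<times> 'b"
    by (metis fst_diff, metis snd_diff)
  then show "abs_cont_on S (\<lambda>t. fst (\<phi> t))" "abs_cont_on S (\<lambda>t. snd (\<phi> t))"
    by (intro abs_cont_on_compose_nonexpansive[OF assms]; blast)+
qed

definition limiting_grad :: "('a::euclidean_space \<Rightarrow> real) \<Rightarrow> 'a \<Rightarrow> 'a set" where
  "limiting_grad V x = {g. \<exists>xk gk. xk \<longlonglongrightarrow> x \<and> gk \<longlonglongrightarrow> g \<and>
     (\<forall>k. (V has_derivative (\<lambda>h. inner (gk k) h)) (at (xk k)))}"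

lemma clarke_grad_eq_hull: "clarke_grad V x = convex hull (limiting_grad V x)"
  unfolding clarke_grad_def limiting_grad_def ..

lemma limiting_grad_subset_clarke_grad: "limiting_grad V x \<subseteq> clarke_grad V x"
  unfolding clarke_grad_eq_hull by (rule hull_subset)

definition cascade_lyapunov ::
    "(real \<Rightarrow> real) \<Rightarrow> ('a \<Rightarrow> real) \<Rightarrow> ('b \<Rightarrow> real) \<Rightarrow> 'a \<times> 'b \<Rightarrow> real" where
  "cascade_lyapunov G V1 V2 = (\<lambda>(x1, x2). G (V2 x2) + V1 x1)"

lemma limiting_grad_cascadeE:
  fixes V1 :: "'a::euclidean_space \<Rightarrow> real" and V2 :: "'b::euclidean_space \<Rightarrow> real"
  assumes "g \<in> limiting_grad (cascade_lyapunov G V1 V2) (x1, x2)"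
  obtains y1 y2 gk where "y1 \<longlonglongrightarrow> x1" "y2 \<longlonglongrightarrow> x2" "gk \<longlonglongrightarrow> g"
    "\<And>k. (V1 has_derivative (\<lambda>h. inner (fst (gk k)) h)) (at (y1 k))"
    "\<And>k. ((\<lambda>z. G (V2 z)) has_derivative (\<lambda>h. inner (snd (gk k)) h)) (at (y2 k))"
proof -
  obtain xk gk where xk: "xk \<longlonglongrightarrow> (x1, x2)" and gk: "gk \<longlonglongrightarrow> g"
    and D: "\<And>k. (cascade_lyapunov G V1 V2 has_derivative (\<lambda>h. inner (gk k) h)) (at (xk k))"
    using assms unfolding limiting_grad_def by blast
  have D': "((\<lambda>(x, y). G (V2 y) + V1 x) has_derivative (\<lambda>h. inner (gk k) h))
      (at (fst (xk k), snd (xk k)))" for k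
    using D[of k] by (simp add: cascade_lyapunov_def)
  have "(\<lambda>k. fst (xk k)) \<longlonglongrightarrow> x1" "(\<lambda>k. snd (xk k)) \<longlonglongrightarrow> x2"
    using tendsto_fst[OF xk] tendsto_snd[OF xk] by simp_all
  with gk show thesis
    using that has_derivative_sum_split[OF D'] by blast
qed

lemma fst_limiting_grad_cascade:
  fixes V1 :: "'a::euclidean_space \<Rightarrow> real" and V2 :: "'b::euclidean_space \<Rightarrow> real"
  assumes "g \<in> limiting_grad (cascade_lyapunov G V1 V2) (x1, x2)"
  shows "fst g \<in> limiting_grad V1 x1"
  using assms
  by (rule limiting_grad_cascadeE) (auto simp: limiting_grad_def intro: tendsto_fst)

locale C1_real =
  fixes U :: "real set" and G G' :: "real \<Rightarrow> real"
  assumes open_U: "open U"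
    and G_deriv: "\<And>s. s \<in> U \<Longrightarrow> (G has_real_derivative G' s) (at s)"
    and G'_cont: "continuous_on U G'"
begin

lemma G'_isCont: "s \<in> U \<Longrightarrow> isCont G' s"
  using G'_cont open_U continuous_on_eq_continuous_at by blast

lemma G'_near:
  assumes s0: "s0 \<in> U" and "0 < \<epsilon>"
  obtains \<delta> where "0 < \<delta>" "ball s0 \<delta> \<subseteq> U" "\<And>s. s \<in> ball s0 \<delta> \<Longrightarrow> \<bar>G' s - G' s0\<bar> < \<epsilon>"
proof -
  obtain \<delta>1 where "0 < \<delta>1" "ball s0 \<delta>1 \<subseteq> U" using open_U s0 by (rule openE)
  moreover obtain \<delta>2 where "0 < \<delta>2" "\<And>s. dist s s0 < \<delta>2 \<Longrightarrow> \<bar>G' s - G' s0\<bar> < \<epsilon>"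
    using G'_isCont[OF s0] \<open>0 < \<epsilon>\<close> unfolding continuous_at_eps_delta dist_real_def by blast
  ultimately show thesis
    by (intro that[of "min \<delta>1 \<delta>2"]) (auto simp: dist_commute)
qed

lemma G_lipschitz_near:
  assumes s0: "s0 \<in> U" and "0 < \<epsilon>"
  obtains \<delta> where "0 < \<delta>" "ball s0 \<delta> \<subseteq> U" "(\<bar>G' s0\<bar> + \<epsilon>)-lipschitz_on (ball s0 \<delta>) G"
proof -
  obtain \<delta> where \<delta>: "0 < \<delta>" "ball s0 \<delta> \<subseteq> U" "\<And>s. s \<in> ball s0 \<delta> \<Longrightarrow> \<bar>G' s - G' s0\<bar> < \<epsilon>"
    using G'_near[OF assms] by blast
  have "(\<bar>G' s0\<bar> + \<epsilon>)-lipschitz_on (ball s0 \<delta>) G"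
  proof (rule bounded_derivative_imp_lipschitz)
    fix s assume s: "s \<in> ball s0 \<delta>"
    then have "(G has_derivative (\<lambda>h. G' s * h)) (at s)"
      using G_deriv \<delta>(2) by (auto simp: has_field_derivative_def)
    then show "(G has_derivative (\<lambda>h. G' s * h)) (at s within ball s0 \<delta>)"
      by (rule has_derivative_subset) simp
    show "onorm (\<lambda>h. G' s * h) \<le> \<bar>G' s0\<bar> + \<epsilon>"
      using \<delta>(3)[OF s] by (intro onorm_le) (auto simp: abs_mult intro!: mult_right_mono)
  qed (use \<open>0 < \<epsilon>\<close> in auto)
  with \<delta> show thesis using that by blast
qed

lemma lipschitz_on_comp_near:
  fixes V :: "'a::metric_space \<Rightarrow> real"
  assumes V_U: "V x \<in> U" and cont: "isCont V x" and "0 < e0" and lip: "K-lipschitz_on (ball x e0) V"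
    and "0 < \<epsilon>"
  obtains e where "0 < e" "e \<le> e0" "((\<bar>G' (V x)\<bar> + \<epsilon>) * K)-lipschitz_on (ball x e) (\<lambda>z. G (V z))"
proof -
  obtain \<delta> where "0 < \<delta>" and G_lip: "(\<bar>G' (V x)\<bar> + \<epsilon>)-lipschitz_on (ball (V x) \<delta>) G"
    using G_lipschitz_near[OF V_U \<open>0 < \<epsilon>\<close>] by blast
  obtain e1 where "0 < e1" and e1: "\<And>z. dist z x < e1 \<Longrightarrow> V z \<in> ball (V x) \<delta>"
    using cont \<open>0 < \<delta>\<close> unfolding continuous_at_eps_delta by (metis dist_commute mem_ball)
  define e where "e = min e0 e1"
  have "((\<bar>G' (V x)\<bar> + \<epsilon>) * K)-lipschitz_on (ball x e) (\<lambda>z. G (V z))"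
  proof (rule lipschitz_on_compose2[where f=V and g=G])
    show "K-lipschitz_on (ball x e) V"
      by (rule lipschitz_on_subset[OF lip subset_ball]) (simp add: e_def)
    show "(\<bar>G' (V x)\<bar> + \<epsilon>)-lipschitz_on (V ` ball x e) G"
      by (rule lipschitz_on_subset[OF G_lip]) (auto simp: e_def dist_commute intro: e1)
  qed
  moreover have "0 < e" "e \<le> e0" using \<open>0 < e0\<close> \<open>0 < e1\<close> by (auto simp: e_def)
  ultimately show thesis using that by blast
qed

lemma G_inj_near:
  assumes s0: "s0 \<in> U" and nz: "G' s0 \<noteq> 0"
  obtains \<delta> where "0 < \<delta>" "ball s0 \<delta> \<subseteq> U" "inj_on G (ball s0 \<delta>)"
proof -
  obtain \<delta> where \<delta>: "0 < \<delta>" "ball s0 \<delta> \<subseteq> U" "\<And>s. s \<in> ball s0 \<delta> \<Longrightarrow> \<bar>G' s - G' s0\<bar> < \<bar>G' s0\<bar>"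
    using G'_near[OF s0] nz by (metis zero_less_abs_iff)
  have "G a \<noteq> G b" if ab: "a \<in> ball s0 \<delta>" "b \<in> ball s0 \<delta>" "a < b" for a b
  proof -
    have ivl: "t \<in> ball s0 \<delta>" if "a \<le> t" "t \<le> b" for t
      using ab that by (auto simp: dist_real_def)
    then obtain z where z: "a < z" "z < b" "G b - G a = (b - a) * G' z"
      using MVT2[OF \<open>a < b\<close>, of G G'] G_deriv \<delta>(2) by blast
    have "\<bar>G' z - G' s0\<bar> < \<bar>G' s0\<bar>" using \<delta>(3) ivl[of z] z by simp
    then have "G' z \<noteq> 0" by auto
    then show ?thesis using z(3) \<open>a < b\<close> by auto
  qed
  then have "inj_on G (ball s0 \<delta>)"
    unfolding inj_on_def by (metis linorder_neqE_linordered_idom)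
  with \<delta> show thesis using that by blast
qed

lemma has_derivative_from_comp:
  fixes V :: "'a::real_normed_vector \<Rightarrow> real"
  assumes Vy: "V y \<in> U" and nz: "G' (V y) \<noteq> 0" and cont: "isCont V y"
    and D: "((\<lambda>z. G (V z)) has_derivative D) (at y)"
  shows "(V has_derivative (\<lambda>h. D h / G' (V y))) (at y)"
proof -
  obtain \<delta> where \<delta>: "0 < \<delta>" "ball (V y) \<delta> \<subseteq> U" and inj: "inj_on G (ball (V y) \<delta>)"
    using G_inj_near[OF Vy nz] by blast
  define H where "H = the_inv_into (ball (V y) \<delta>) G"
  have HG: "H (G s) = s" if "s \<in> ball (V y) \<delta>" for s
    unfolding H_def using the_inv_into_f_f[OF inj that] .
  have "continuous_on (ball (V y) \<delta>) G"
    using \<delta>(2) G_deriv by (auto intro!: continuous_at_imp_continuous_on DERIV_isCont)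
  then have "(H has_derivative (\<lambda>h. h / G' (V y))) (at (G (V y)))"
    using G_deriv[OF Vy] nz \<delta>(1)
    by (intro has_derivative_inverse_strong[of "ball (V y) \<delta>" "V y" G H "\<lambda>h. G' (V y) * h"])
       (auto simp: HG has_field_derivative_def fun_eq_iff)
  from has_derivative_compose[OF D this]
  have HGV: "((\<lambda>z. H (G (V z))) has_derivative (\<lambda>h. D h / G' (V y))) (at y)" .
  obtain e where e: "0 < e" "\<And>z. dist z y < e \<Longrightarrow> V z \<in> ball (V y) \<delta>"
    using cont \<delta>(1) unfolding continuous_at_eps_delta by (metis dist_commute mem_ball)
  show ?thesis
    by (rule has_derivative_transform_within[OF HGV e(1) UNIV_I]) (use HG e(2) in blast)
qed

lemma has_derivative_cascade:
  fixes V1 :: "'a::euclidean_space \<Rightarrow> real" and V2 :: "'b::euclidean_space \<Rightarrow> real"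
  assumes D1: "(V1 has_derivative (\<lambda>h. inner p1 h)) (at a)"
    and D2: "(V2 has_derivative (\<lambda>h. inner p2 h)) (at b)" and b: "V2 b \<in> U"
  shows "(cascade_lyapunov G V1 V2 has_derivative (\<lambda>h. inner (p1, G' (V2 b) *\<^sub>R p2) h)) (at (a, b))"
proof -
  have "(V1 has_derivative (\<lambda>h. inner p1 h)) (at (fst (a, b)))" using D1 by simp
  from has_derivative_compose[OF has_derivative_fst[OF has_derivative_ident] this]
  have fst: "((\<lambda>z. V1 (fst z)) has_derivative (\<lambda>h. inner p1 (fst h))) (at (a, b))" .
  have "(V2 has_derivative (\<lambda>h. inner p2 h)) (at (snd (a, b)))" using D2 by simp
  from has_derivative_compose[OF has_derivative_snd[OF has_derivative_ident] this]
  have "((\<lambda>z. V2 (snd z)) has_derivative (\<lambda>h. inner p2 (snd h))) (at (a, b))" .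
  moreover have "(G has_derivative (\<lambda>s. G' (V2 b) * s)) (at (V2 (snd (a, b))))"
    using G_deriv[OF b] by (simp add: has_field_derivative_def)
  ultimately have snd: "((\<lambda>z. G (V2 (snd z))) has_derivative (\<lambda>h. G' (V2 b) * inner p2 (snd h))) (at (a, b))"
    by (rule has_derivative_compose)
  have "cascade_lyapunov G V1 V2 = (\<lambda>z. G (V2 (snd z)) + V1 (fst z))"
    by (auto simp: cascade_lyapunov_def)
  moreover have "(\<lambda>h. G' (V2 b) * inner p2 (snd h) + inner p1 (fst h)) = (\<lambda>h. inner (p1, G' (V2 b) *\<^sub>R p2) h)"
    by (auto simp: inner_prod_def inner_commute)
  ultimately show ?thesis using has_derivative_add[OF snd fst] by simp
qed

lemma limiting_grad_cascade_pair:
  fixes V1 :: "'a::euclidean_space \<Rightarrow> real" and V2 :: "'b::euclidean_space \<Rightarrow> real"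
  assumes p1: "p1 \<in> limiting_grad V1 x1" and p2: "p2 \<in> limiting_grad V2 x2"
    and V2_U: "\<And>z. V2 z \<in> U" and cont: "isCont V2 x2"
  shows "(p1, G' (V2 x2) *\<^sub>R p2) \<in> limiting_grad (cascade_lyapunov G V1 V2) (x1, x2)"
proof -
  obtain a ga where a: "a \<longlonglongrightarrow> x1" "ga \<longlonglongrightarrow> p1"
      "\<And>k. (V1 has_derivative (\<lambda>h. inner (ga k) h)) (at (a k))"
    using p1 unfolding limiting_grad_def by blast
  obtain b gb where b: "b \<longlonglongrightarrow> x2" "gb \<longlonglongrightarrow> p2"
      "\<And>k. (V2 has_derivative (\<lambda>h. inner (gb k) h)) (at (b k))"
    using p2 unfolding limiting_grad_def by blast
  have "(\<lambda>k. G' (V2 (b k))) \<longlonglongrightarrow> G' (V2 x2)"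
    by (rule isCont_tendsto_compose[OF G'_isCont[OF V2_U] isCont_tendsto_compose[OF cont b(1)]])
  then have "(\<lambda>k. (ga k, G' (V2 (b k)) *\<^sub>R gb k)) \<longlonglongrightarrow> (p1, G' (V2 x2) *\<^sub>R p2)"
    by (intro tendsto_Pair a(2) tendsto_scaleR b(2))
  moreover have "(\<lambda>k. (a k, b k)) \<longlonglongrightarrow> (x1, x2)" by (intro tendsto_Pair a(1) b(1))
  ultimately show ?thesis
    unfolding limiting_grad_def using has_derivative_cascade[OF a(3) b(3) V2_U] by blast
qed

lemma snd_limiting_grad_cascade_regular:
  fixes V1 :: "'a::euclidean_space \<Rightarrow> real" and V2 :: "'b::euclidean_space \<Rightarrow> real"
  assumes g: "g \<in> limiting_grad (cascade_lyapunov G V1 V2) (x1, x2)"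
    and V2_U: "\<And>z. V2 z \<in> U" and cont: "\<And>z. isCont V2 z" and nz: "G' (V2 x2) \<noteq> 0"
  shows "snd g /\<^sub>R G' (V2 x2) \<in> limiting_grad V2 x2"
proof -
  obtain y2 gk where y2: "y2 \<longlonglongrightarrow> x2" and gk: "gk \<longlonglongrightarrow> g"
    and D2: "\<And>k. ((\<lambda>z. G (V2 z)) has_derivative (\<lambda>h. inner (snd (gk k)) h)) (at (y2 k))"
    using limiting_grad_cascadeE[OF g] by metis
  have G'y2: "(\<lambda>k. G' (V2 (y2 k))) \<longlonglongrightarrow> G' (V2 x2)"
    by (rule isCont_tendsto_compose[OF G'_isCont[OF V2_U] isCont_tendsto_compose[OF cont y2]])
  then obtain N where N: "\<And>k. N \<le> k \<Longrightarrow> G' (V2 (y2 k)) \<noteq> 0"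
    using tendsto_imp_eventually_ne[OF G'y2 nz] unfolding eventually_sequentially by blast
  define h where "h k = snd (gk (k + N)) /\<^sub>R G' (V2 (y2 (k + N)))" for k
  have "(V2 has_derivative (\<lambda>v. inner (h k) v)) (at (y2 (k + N)))" for k
    using has_derivative_from_comp[OF V2_U N[of "k + N"] cont D2[of "k + N"]]
    by (simp add: h_def divide_inverse mult.commute)
  moreover have "h \<longlonglongrightarrow> snd g /\<^sub>R G' (V2 x2)"
    unfolding h_def
    by (intro tendsto_scaleR tendsto_inverse nz LIMSEQ_ignore_initial_segment G'y2 tendsto_snd gk)
  moreover have "(\<lambda>k. y2 (k + N)) \<longlonglongrightarrow> x2" by (rule LIMSEQ_ignore_initial_segment[OF y2])
  ultimately show ?thesis unfolding limiting_grad_def by blast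
qed

text \<open>Where \<open>G'\<close> vanishes, \<open>G \<circ> V2\<close> has arbitrarily small Lipschitz constants near \<open>x2\<close>,
  and these bound the norms of its gradients.\<close>

lemma snd_limiting_grad_cascade_critical:
  fixes V1 :: "'a::euclidean_space \<Rightarrow> real" and V2 :: "'b::euclidean_space \<Rightarrow> real"
  assumes g: "g \<in> limiting_grad (cascade_lyapunov G V1 V2) (x1, x2)"
    and V2_U: "\<And>z. V2 z \<in> U" and lip: "loc_lipschitz V2" and crit: "G' (V2 x2) = 0"
  shows "snd g = 0"
proof -
  obtain y2 gk where y2: "y2 \<longlonglongrightarrow> x2" and gk: "gk \<longlonglongrightarrow> g"
    and D2: "\<And>k. ((\<lambda>z. G (V2 z)) has_derivative (\<lambda>h. inner (snd (gk k)) h)) (at (y2 k))"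
    using limiting_grad_cascadeE[OF g] by metis
  obtain e2 L where "0 < e2" and L: "L-lipschitz_on (ball x2 e2) V2"
    using lip unfolding loc_lipschitz_def by blast
  have "(\<lambda>k. snd (gk k)) \<longlonglongrightarrow> 0"
    unfolding LIMSEQ_iff
  proof (intro allI impI)
    fix r :: real assume r: "0 < r"
    define \<epsilon> where "\<epsilon> = r / (L + 1)"
    have \<epsilon>: "0 < \<epsilon>" "\<epsilon> * L < r"
      using r lipschitz_on_nonneg[OF L] by (auto simp: \<epsilon>_def field_simps)
    obtain e where "0 < e" and "((\<bar>G' (V2 x2)\<bar> + \<epsilon>) * L)-lipschitz_on (ball x2 e) (\<lambda>z. G (V2 z))"
      using lipschitz_on_comp_near[OF V2_U loc_lipschitz_isCont[OF lip] \<open>0 < e2\<close> L \<epsilon>(1)] by blast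
    then have GV2_lip: "(\<epsilon> * L)-lipschitz_on (ball x2 e) (\<lambda>z. G (V2 z))" using crit by simp
    obtain N where N: "\<And>k. N \<le> k \<Longrightarrow> dist (y2 k) x2 < e / 2"
      using y2 \<open>0 < e\<close> unfolding LIMSEQ_def by (meson half_gt_zero)
    show "\<exists>N. \<forall>k\<ge>N. norm (snd (gk k) - 0) < r"
    proof (intro exI[of _ N] allI impI)
      fix k assume "N \<le> k"
      then have "ball (y2 k) (e / 2) \<subseteq> ball x2 e"
        using N by (metis dist_commute dist_triangle_half_l mem_ball subsetI)
      then have "(\<epsilon> * L)-lipschitz_on (ball (y2 k) (e / 2)) (\<lambda>z. G (V2 z))"
        by (rule lipschitz_on_subset[OF GV2_lip])
      then have "norm (snd (gk k)) \<le> \<epsilon> * L"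
        using \<open>0 < e\<close> by (intro has_derivative_norm_le_lipschitz[OF D2]) auto
      then show "norm (snd (gk k) - 0) < r" using \<epsilon>(2) by simp
    qed
  qed
  then show ?thesis using LIMSEQ_unique tendsto_snd[OF gk] by blast
qed

lemma clarke_grad_cascade_pair:
  fixes V1 :: "'a::euclidean_space \<Rightarrow> real" and V2 :: "'b::euclidean_space \<Rightarrow> real"
  assumes p1: "p1 \<in> clarke_grad V1 x1" and p2: "p2 \<in> clarke_grad V2 x2"
    and V2_U: "\<And>z. V2 z \<in> U" and cont: "isCont V2 x2"
  shows "(p1, G' (V2 x2) *\<^sub>R p2) \<in> clarke_grad (cascade_lyapunov G V1 V2) (x1, x2)"
proof -
  let ?c = "G' (V2 x2)"
  have "(p1, ?c *\<^sub>R p2) \<in> (convex hull (limiting_grad V1 x1)) \<times> ((*\<^sub>R) ?c ` (convex hull (limiting_grad V2 x2)))"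
    using p1 p2 by (auto simp: clarke_grad_eq_hull)
  also have "\<dots> = convex hull (limiting_grad V1 x1 \<times> (*\<^sub>R) ?c ` limiting_grad V2 x2)"
    by (simp add: convex_hull_Times convex_hull_scaling)
  also have "\<dots> \<subseteq> convex hull (limiting_grad (cascade_lyapunov G V1 V2) (x1, x2))"
    using limiting_grad_cascade_pair[OF _ _ V2_U cont] by (intro hull_mono) auto
  finally show ?thesis by (simp add: clarke_grad_eq_hull)
qed

lemma clarke_grad_cascade_inner:
  fixes V1 :: "'a::euclidean_space \<Rightarrow> real" and V2 :: "'b::euclidean_space \<Rightarrow> real"
  assumes V2_U: "\<And>z. V2 z \<in> U" and lip: "loc_lipschitz V2"
    and c1: "\<And>p. p \<in> clarke_grad V1 x1 \<Longrightarrow> inner p d1 = c1"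
    and c2: "\<And>p. p \<in> clarke_grad V2 x2 \<Longrightarrow> inner p d2 = c2"
    and v: "v \<in> clarke_grad (cascade_lyapunov G V1 V2) (x1, x2)"
  shows "inner v (d1, d2) = c1 + G' (V2 x2) * c2"
proof -
  let ?C = "c1 + G' (V2 x2) * c2"
  have "limiting_grad (cascade_lyapunov G V1 V2) (x1, x2) \<subseteq> {v. inner (d1, d2) v = ?C}"
  proof
    fix g assume g: "g \<in> limiting_grad (cascade_lyapunov G V1 V2) (x1, x2)"
    have "inner (fst g) d1 = c1"
      using c1 fst_limiting_grad_cascade[OF g] limiting_grad_subset_clarke_grad by blast
    moreover have "inner (snd g) d2 = G' (V2 x2) * c2"
    proof (cases "G' (V2 x2) = 0")
      case True
      then show ?thesis using snd_limiting_grad_cascade_critical[OF g V2_U lip] by simp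
    next
      case False
      then have "snd g /\<^sub>R G' (V2 x2) \<in> clarke_grad V2 x2"
        using snd_limiting_grad_cascade_regular[OF g V2_U loc_lipschitz_isCont[OF lip]]
          limiting_grad_subset_clarke_grad by blast
      then show ?thesis using c2 False by (fastforce simp: field_simps)
    qed
    ultimately show "g \<in> {v. inner (d1, d2) v = ?C}"
      by (simp add: inner_prod_def inner_commute)
  qed
  then have "convex hull (limiting_grad (cascade_lyapunov G V1 V2) (x1, x2)) \<subseteq> {v. inner (d1, d2) v = ?C}"
    by (intro hull_minimal convex_hyperplane)
  then show ?thesis using v by (auto simp: clarke_grad_eq_hull inner_commute)
qed

lemma loc_lipschitz_cascade:
  fixes V1 :: "'a::euclidean_space \<Rightarrow> real" and V2 :: "'b::euclidean_space \<Rightarrow> real"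
  assumes V2_U: "\<And>z. V2 z \<in> U" and lip1: "loc_lipschitz V1" and lip2: "loc_lipschitz V2"
  shows "loc_lipschitz (cascade_lyapunov G V1 V2)"
  unfolding loc_lipschitz_def
proof
  fix x :: "'a \<times> 'b"
  obtain x1 x2 where x: "x = (x1, x2)" by (cases x)
  obtain e1 K1 where "0 < e1" and K1: "K1-lipschitz_on (ball x1 e1) V1"
    using lip1 unfolding loc_lipschitz_def by blast
  obtain e2 K2 where "0 < e2" and K2: "K2-lipschitz_on (ball x2 e2) V2"
    using lip2 unfolding loc_lipschitz_def by blast
  obtain e3 where "0 < e3"
    and K3: "((\<bar>G' (V2 x2)\<bar> + 1) * K2)-lipschitz_on (ball x2 e3) (\<lambda>z. G (V2 z))"
    using lipschitz_on_comp_near[OF V2_U loc_lipschitz_isCont[OF lip2] \<open>0 < e2\<close> K2, of 1] by auto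
  define e where "e = min e1 e3"
  let ?B = "ball x e"
  have "dist x1 (fst z) < e1 \<and> dist x2 (snd z) < e3" if "z \<in> ?B" for z
    using that dist_fst_le[of x z] dist_snd_le[of x z] by (auto simp: x e_def)
  then have fst_B: "fst ` ?B \<subseteq> ball x1 e1" and snd_B: "snd ` ?B \<subseteq> ball x2 e3"
    by auto
  have lip_fst: "1-lipschitz_on ?B fst" and lip_snd: "1-lipschitz_on ?B snd"
    by (intro lipschitz_onI; simp add: dist_fst_le dist_snd_le)+
  have l1: "(K1 * 1)-lipschitz_on ?B (\<lambda>z. V1 (fst z))"
    by (rule lipschitz_on_compose2[OF lip_fst lipschitz_on_subset[OF K1 fst_B]])
  have l2: "((\<bar>G' (V2 x2)\<bar> + 1) * K2 * 1)-lipschitz_on ?B (\<lambda>z. G (V2 (snd z)))"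
    by (rule lipschitz_on_compose2[OF lip_snd lipschitz_on_subset[OF K3 snd_B]])
  have "cascade_lyapunov G V1 V2 = (\<lambda>z. G (V2 (snd z)) + V1 (fst z))"
    by (auto simp: cascade_lyapunov_def)
  then have "((\<bar>G' (V2 x2)\<bar> + 1) * K2 * 1 + K1 * 1)-lipschitz_on ?B (cascade_lyapunov G V1 V2)"
    using lipschitz_on_add[OF l2 l1] by simp
  moreover have "0 < e" using \<open>0 < e1\<close> \<open>0 < e3\<close> by (simp add: e_def)
  ultimately show "\<exists>e>0. \<exists>L. L-lipschitz_on (ball x e) (cascade_lyapunov G V1 V2)" by blast
qed

lemma cascade_inner_vector_derivative:
  fixes V1 :: "'a::euclidean_space \<Rightarrow> real" and V2 :: "'b::euclidean_space \<Rightarrow> real"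
    and \<phi> :: "real \<Rightarrow> 'a \<times> 'b"
  assumes V2_U: "\<And>z. V2 z \<in> U" and lip2: "loc_lipschitz V2"
    and d1: "(\<lambda>t. fst (\<phi> t)) differentiable (at t)"
    and c1: "\<forall>v\<in>clarke_grad V1 (fst (\<phi> t)). inner v (vector_derivative (\<lambda>t. fst (\<phi> t)) (at t)) = c1"
    and d2: "(\<lambda>t. snd (\<phi> t)) differentiable (at t)"
    and c2: "\<forall>v\<in>clarke_grad V2 (snd (\<phi> t)). inner v (vector_derivative (\<lambda>t. snd (\<phi> t)) (at t)) = c2"
  shows "\<phi> differentiable (at t) \<and>
    (\<exists>c. \<forall>v\<in>clarke_grad (cascade_lyapunov G V1 V2) (\<phi> t). inner v (vector_derivative \<phi> (at t)) = c)"
proof -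
  define D where
    "D = (vector_derivative (\<lambda>t. fst (\<phi> t)) (at t), vector_derivative (\<lambda>t. snd (\<phi> t)) (at t))"
  have D: "(\<phi> has_vector_derivative D) (at t)"
    using has_vector_derivative_Pair[OF d1[unfolded vector_derivative_works] d2[unfolded vector_derivative_works]]
    by (simp add: D_def)
  have "inner v D = c1 + G' (V2 (snd (\<phi> t))) * c2"
    if "v \<in> clarke_grad (cascade_lyapunov G V1 V2) (fst (\<phi> t), snd (\<phi> t))" for v
    unfolding D_def by (rule clarke_grad_cascade_inner[OF V2_U lip2 _ _ that]) (use c1 c2 in auto)
  then have "\<forall>v\<in>clarke_grad (cascade_lyapunov G V1 V2) (\<phi> t).
      inner v (vector_derivative \<phi> (at t)) = c1 + G' (V2 (snd (\<phi> t))) * c2"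
    using vector_derivative_at[OF D] by simp
  then show ?thesis using differentiableI_vector[OF D] by blast
qed

lemma nonpathological_cascade:
  fixes V1 :: "'a::euclidean_space \<Rightarrow> real" and V2 :: "'b::euclidean_space \<Rightarrow> real"
  assumes V2_U: "\<And>z. V2 z \<in> U" and np1: "nonpathological V1" and np2: "nonpathological V2"
  shows "nonpathological (cascade_lyapunov G V1 V2)"
  unfolding nonpathological_def
proof (intro conjI allI impI)
  have lip1: "loc_lipschitz V1" and lip2: "loc_lipschitz V2"
    using np1 np2 unfolding nonpathological_def by blast+
  show "loc_lipschitz (cascade_lyapunov G V1 V2)"
    by (rule loc_lipschitz_cascade[OF V2_U lip1 lip2])
  fix \<phi> :: "real \<Rightarrow> 'a \<times> 'b" and a b
  assume ac: "abs_cont_on {a..b} \<phi>"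
  note A1 = np1[unfolded nonpathological_def, THEN conjunct2, rule_format, OF abs_cont_on_fst_snd(1)[OF ac]]
  note A2 = np2[unfolded nonpathological_def, THEN conjunct2, rule_format, OF abs_cont_on_fst_snd(2)[OF ac]]
  show "AE t in lebesgue. t \<in> {a..b} \<longrightarrow> \<phi> differentiable (at t) \<and>
      (\<exists>c. \<forall>v\<in>clarke_grad (cascade_lyapunov G V1 V2) (\<phi> t). inner v (vector_derivative \<phi> (at t)) = c)"
    using A1 A2 by eventually_elim (use cascade_inner_vector_derivative[OF V2_U lip2] in blast)
qed

end

section \<open>ISS estimates for the cascade\<close>

lemma C1_real_weight_primitive:
  assumes "weight \<nu>" shows "C1_real {-1<..} (weight_primitive \<nu>) (weight_ext \<nu>)"
  by unfold_locales
     (auto intro: weight_primitive_deriv[OF assms] continuous_on_subset[OF continuous_weight_ext[OF assms]])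

lemma nonpathological_cascade_weight:
  assumes \<nu>: "weight \<nu>" and V2_nonneg: "\<And>x. 0 \<le> V2 x"
    and "nonpathological V1" "nonpathological V2"
  shows "nonpathological (cascade_lyapunov (weight_primitive \<nu>) V1 V2)"
proof -
  interpret C1_real "{-1<..}" "weight_primitive \<nu>" "weight_ext \<nu>"
    by (rule C1_real_weight_primitive[OF \<nu>])
  have "V2 z \<in> {-1<..}" for z using V2_nonneg[of z] by simp
  then show ?thesis by (rule nonpathological_cascade[OF _ assms(3,4)])
qed

text \<open>For a locally Lipschitz function this also follows from Rademacher's theorem; here it is
  forced by the bound, since an empty Clarke gradient makes every real a Lie derivative value.\<close>

lemma clarke_grad_nonempty_of_max_le:
  assumes "max_le (lie_set V x A) c" and "f \<in> A"
  shows "clarke_grad V x \<noteq> {}"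
proof
  assume "clarke_grad V x = {}"
  then have "c + 1 \<in> lie_set V x A" using \<open>f \<in> A\<close> unfolding lie_set_def by blast
  then show False using assms(1) unfolding max_le_def by fastforce
qed

lemma max_le_lie_set_cascade:
  fixes V1 :: "'a::euclidean_space \<Rightarrow> real" and V2 :: "'b::euclidean_space \<Rightarrow> real"
    and W :: "'a \<times> 'b \<Rightarrow> real"
  assumes pair: "\<And>p1 p2. p1 \<in> clarke_grad V1 x1 \<Longrightarrow> p2 \<in> clarke_grad V2 x2 \<Longrightarrow>
      (p1, n *\<^sub>R p2) \<in> clarke_grad W (x1, x2)"
    and n: "0 \<le> n"
    and le1: "max_le (lie_set V1 x1 A1) c1" and le2: "max_le (lie_set V2 x2 A2) c2"
  shows "max_le (lie_set W (x1, x2) (A1 \<times> A2)) (c1 + n * c2)"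
  unfolding max_le_def
proof
  fix a assume "a \<in> lie_set W (x1, x2) (A1 \<times> A2)"
  then obtain f1 f2 where f1: "f1 \<in> A1" and f2: "f2 \<in> A2"
    and fa: "\<And>p. p \<in> clarke_grad W (x1, x2) \<Longrightarrow> inner p (f1, f2) = a"
    unfolding lie_set_def by auto
  have split: "inner p1 f1 + n * inner p2 f2 = a"
    if "p1 \<in> clarke_grad V1 x1" "p2 \<in> clarke_grad V2 x2" for p1 p2
    using fa[OF pair[OF that]] by simp
  obtain q1 q2 where q1: "q1 \<in> clarke_grad V1 x1" and q2: "q2 \<in> clarke_grad V2 x2"
    using clarke_grad_nonempty_of_max_le[OF le1 f1] clarke_grad_nonempty_of_max_le[OF le2 f2] by blast
  define b where "b = inner q2 f2"
  have "a - n * b \<in> lie_set V1 x1 A1"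
    unfolding lie_set_def using f1 split[OF _ q2] by (auto simp: b_def algebra_simps)
  then have a1: "a - n * b \<le> c1" using le1 unfolding max_le_def by blast
  show "a \<le> c1 + n * c2"
  proof (cases "n = 0")
    case False
    have "inner p f2 = b" if "p \<in> clarke_grad V2 x2" for p
    proof -
      have "n * inner p f2 = n * b" using split[OF q1 that] split[OF q1 q2] unfolding b_def by linarith
      then show ?thesis using False by simp
    qed
    then have "b \<in> lie_set V2 x2 A2" unfolding lie_set_def using f2 by blast
    then have "n * b \<le> n * c2" using le2 n unfolding max_le_def by (simp add: mult_left_mono)
    then show ?thesis using a1 by linarith
  qed (use a1 in simp)
qed

lemma cascade_decay_rate:
  assumes \<nu>: "weight \<nu>" and \<nu>_pos: "\<And>s. 0 < s \<Longrightarrow> 0 < \<nu> s"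
    and \<rho>1: "classKinf \<rho>1" and \<rho>2: "classKinf \<rho>2"
  obtains \<rho> where "classKinf \<rho>"
    "\<And>v1 v2. 0 \<le> v1 \<Longrightarrow> 0 \<le> v2 \<Longrightarrow> \<rho> (integral {0..v2} \<nu> + v1) \<le> \<rho>1 v1 + \<nu> v2 * \<rho>2 v2 / 4"
proof -
  let ?G = "\<lambda>s. integral {0..s} \<nu>"
  have G: "classKinf ?G" by (rule classKinf_integral_weight[OF \<nu> \<nu>_pos])
  obtain Gi where Gi: "classKinf Gi" "\<And>s. 0 \<le> s \<Longrightarrow> Gi (?G s) = s"
    "\<And>w. 0 \<le> w \<Longrightarrow> ?G (Gi w) = w"
    by (rule classKinf_inverse[OF G]) blast
  have half: "classKinf (\<lambda>r::real. r / 2)" and quarter: "classKinf (\<lambda>r::real. r / 4)"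
    by (rule classKinf_divide, simp)+
  define \<kappa> where "\<kappa> t = \<rho>2 (Gi t) * \<nu> (Gi t) / 4" for t
  have \<kappa>: "classKinf \<kappa>"
    unfolding \<kappa>_def[abs_def]
    by (rule classKinf_compose[OF quarter classKinf_compose[OF classKinf_mult_weight[OF \<rho>2 \<nu> \<nu>_pos] Gi(1)]])
  define \<rho> where "\<rho> w = min (\<rho>1 (w / 2)) (\<kappa> (w / 2))" for w
  have "classKinf \<rho>"
    unfolding \<rho>_def[abs_def]
    by (rule classKinf_min[OF classKinf_compose[OF \<rho>1 half] classKinf_compose[OF \<kappa> half]])
  moreover have "\<rho> (?G v2 + v1) \<le> \<rho>1 v1 + \<nu> v2 * \<rho>2 v2 / 4" if "0 \<le> v1" "0 \<le> v2" for v1 v2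
  proof -
    have "0 \<le> ?G v2" using classK_nonneg[OF classKinf_imp_classK[OF G] \<open>0 \<le> v2\<close>] .
    then have "\<rho> (?G v2 + v1) \<le> \<rho>1 v1 + \<kappa> (?G v2)"
      unfolding \<rho>_def using that
      by (intro classK_min_half_le_add[OF classKinf_imp_classK[OF \<rho>1] classKinf_imp_classK[OF \<kappa>]]) simp_all
    also have "\<kappa> (?G v2) = \<nu> v2 * \<rho>2 v2 / 4" by (simp add: \<kappa>_def Gi(2)[OF \<open>0 \<le> v2\<close>] mult.commute)
    finally show ?thesis .
  qed
  ultimately show thesis by (rule that)
qed

lemma cascade_gain_rate:
  assumes \<nu>: "weight \<nu>" and \<rho>2: "classKinf \<rho>2" and \<gamma>2: "classK \<gamma>2"
  obtains \<gamma> where "classK \<gamma>"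
    "\<And>v r. 0 \<le> v \<Longrightarrow> 0 \<le> r \<Longrightarrow> \<nu> v * \<gamma>2 r \<le> \<nu> v * \<rho>2 v / 2 + \<gamma> r - \<gamma>2 r"
proof -
  obtain \<rho>2i where \<rho>2i: "classKinf \<rho>2i" "\<And>s. 0 \<le> s \<Longrightarrow> \<rho>2i (\<rho>2 s) = s"
    "\<And>w. 0 \<le> w \<Longrightarrow> \<rho>2 (\<rho>2i w) = w"
    by (rule classKinf_inverse[OF \<rho>2]) blast
  define m where "m r = \<nu> (\<rho>2i (2 * \<gamma>2 r))" for r
  define \<gamma> where "\<gamma> r = \<gamma>2 r * (1 + m r)" for r
  have m: "weight m"
    unfolding m_def[abs_def]
    by (rule weight_compose_classK[OF \<nu> classK_compose[OF classKinf_imp_classK[OF \<rho>2i(1)]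
          classK_cmult[OF _ \<gamma>2]]]) simp
  have "classK \<gamma>"
    unfolding \<gamma>_def[abs_def]
  proof (rule classK_mult_weight[OF \<gamma>2 weight_add_const[OF m]])
    show "0 < 1 + m s" if "0 < s" for s using weight_nonneg[OF m, of s] that by simp
  qed simp
  moreover have "\<nu> v * \<gamma>2 r \<le> \<nu> v * \<rho>2 v / 2 + \<gamma> r - \<gamma>2 r" if "0 \<le> v" "0 \<le> r" for v r
  proof -
    have "0 \<le> \<gamma>2 r" by (rule classK_nonneg[OF \<gamma>2 \<open>0 \<le> r\<close>])
    then have "0 \<le> \<rho>2i (2 * \<gamma>2 r)" "\<rho>2 (\<rho>2i (2 * \<gamma>2 r)) = 2 * \<gamma>2 r"
      using classK_nonneg[OF classKinf_imp_classK[OF \<rho>2i(1)]] \<rho>2i(3) by simp_all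
    then have "\<nu> v * \<gamma>2 r \<le> \<nu> v * \<rho>2 v / 2 + \<gamma>2 r * m r"
      unfolding m_def
      by (rule weight_gain_split[OF \<nu> classKinf_imp_classK[OF \<rho>2] \<open>0 \<le> v\<close> \<open>0 \<le> \<gamma>2 r\<close>])
    then show ?thesis by (simp add: \<gamma>_def algebra_simps)
  qed
  ultimately show thesis by (rule that)
qed

lemma cascade_bounds:
  fixes V1 :: "'a::real_normed_vector \<Rightarrow> real" and V2 :: "'b::real_normed_vector \<Rightarrow> real"
  assumes G: "classKinf (\<lambda>s. integral {0..s} \<nu>)"
    and "classKinf a1l" "classKinf a1u" "classKinf a2l" "classKinf a2u"
    and V1_bnd: "\<And>x1. a1l (norm x1) \<le> V1 x1 \<and> V1 x1 \<le> a1u (norm x1)"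
    and V2_bnd: "\<And>x2. a2l (norm x2) \<le> V2 x2 \<and> V2 x2 \<le> a2u (norm x2)"
  shows "\<exists>al au. classKinf al \<and> classKinf au \<and> (\<forall>x1 x2.
    al (norm (x1, x2)) \<le> integral {0..V2 x2} \<nu> + V1 x1 \<and> integral {0..V2 x2} \<nu> + V1 x1 \<le> au (norm (x1, x2)))"
proof (rule classKinf_sandwich_add[where f=V1 and g="\<lambda>x2. integral {0..V2 x2} \<nu>" and lf=a1l
      and uf=a1u and lg="\<lambda>r. integral {0..a2l r} \<nu>" and ug="\<lambda>r. integral {0..a2u r} \<nu>"])
  show "classKinf (\<lambda>r. integral {0..a2l r} \<nu>)" "classKinf (\<lambda>r. integral {0..a2u r} \<nu>)"
    using assms by (auto intro: classKinf_compose[OF G])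
  fix x2 :: 'b
  have "0 \<le> a2l (norm x2)"
    by (rule classK_nonneg[OF classKinf_imp_classK[OF \<open>classKinf a2l\<close>] norm_ge_zero])
  moreover have "a2l (norm x2) \<le> V2 x2" "V2 x2 \<le> a2u (norm x2)" using V2_bnd[of x2] by simp_all
  ultimately show "integral {0..a2l (norm x2)} \<nu> \<le> integral {0..V2 x2} \<nu> \<and>
      integral {0..V2 x2} \<nu> \<le> integral {0..a2u (norm x2)} \<nu>"
    using classK_mono[OF classKinf_imp_classK[OF G], of "a2l (norm x2)" "V2 x2"]
      classK_mono[OF classKinf_imp_classK[OF G], of "V2 x2" "a2u (norm x2)"] by simp
qed (use assms in blast)+

lemma cascade_dissipation:
  fixes F1 :: "'a::euclidean_space \<Rightarrow> 'b::euclidean_space \<Rightarrow> 'c::euclidean_space \<Rightarrow> 'a set"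
    and F2 :: "'b \<Rightarrow> 'c \<Rightarrow> 'b set" and V1 :: "'a \<Rightarrow> real" and V2 :: "'b \<Rightarrow> real"
  assumes \<nu>: "weight \<nu>" and \<nu>_dom: "\<And>s. 0 < s \<Longrightarrow> 4 * (\<gamma>1 s / \<rho>2 s) \<le> \<nu> s"
    and V1_nonneg: "\<And>x. 0 \<le> V1 x" and V2_nonneg: "\<And>x. 0 \<le> V2 x" and V2_cont: "\<And>x. isCont V2 x"
    and \<rho>1: "classKinf \<rho>1" and \<rho>2: "classKinf \<rho>2" and \<gamma>1: "classK \<gamma>1" and \<gamma>2: "classK \<gamma>2"
    and V2_dec: "\<And>x2 u. max_le (lie_set V2 x2 (F2 x2 u)) (- \<rho>2 (V2 x2) + \<gamma>2 (norm u))"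
    and V1_dec: "\<And>x1 x2 u. max_le (lie_set V1 x1 (F1 x1 x2 u))
                    (- \<rho>1 (V1 x1) + \<gamma>1 (V2 x2) + \<gamma>2 (norm u))"
  shows "\<exists>\<rho> \<gamma>. classKinf \<rho> \<and> classK \<gamma> \<and> (\<forall>x1 x2 u.
    max_le (lie_set (cascade_lyapunov (weight_primitive \<nu>) V1 V2) (x1, x2) (F1 x1 x2 u \<times> F2 x2 u))
      (- \<rho> (integral {0..V2 x2} \<nu> + V1 x1) + \<gamma> (norm u)))"
proof -
  have \<nu>_pos: "\<And>s. 0 < s \<Longrightarrow> 0 < \<nu> s"
    by (rule dominating_weight_pos[OF \<gamma>1 classKinf_imp_classK[OF \<rho>2] _ \<nu>_dom]) simp
  obtain \<rho> where "classKinf \<rho>"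
    and \<rho>_le: "\<And>v1 v2. 0 \<le> v1 \<Longrightarrow> 0 \<le> v2 \<Longrightarrow> \<rho> (integral {0..v2} \<nu> + v1) \<le> \<rho>1 v1 + \<nu> v2 * \<rho>2 v2 / 4"
    using cascade_decay_rate[OF \<nu> \<nu>_pos \<rho>1 \<rho>2] by metis
  obtain \<gamma> where "classK \<gamma>"
    and \<gamma>_ge: "\<And>v r. 0 \<le> v \<Longrightarrow> 0 \<le> r \<Longrightarrow> \<nu> v * \<gamma>2 r \<le> \<nu> v * \<rho>2 v / 2 + \<gamma> r - \<gamma>2 r"
    using cascade_gain_rate[OF \<nu> \<rho>2 \<gamma>2] by metis
  interpret C1_real "{-1<..}" "weight_primitive \<nu>" "weight_ext \<nu>"
    by (rule C1_real_weight_primitive[OF \<nu>])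
  have V2_U: "V2 z \<in> {-1<..}" for z using V2_nonneg[of z] by simp
  have "max_le (lie_set (cascade_lyapunov (weight_primitive \<nu>) V1 V2) (x1, x2) (F1 x1 x2 u \<times> F2 x2 u))
      (- \<rho> (integral {0..V2 x2} \<nu> + V1 x1) + \<gamma> (norm u))" for x1 x2 u
  proof -
    let ?n = "\<nu> (V2 x2)"
    have "max_le (lie_set (cascade_lyapunov (weight_primitive \<nu>) V1 V2) (x1, x2) (F1 x1 x2 u \<times> F2 x2 u))
        ((- \<rho>1 (V1 x1) + \<gamma>1 (V2 x2) + \<gamma>2 (norm u)) + ?n * (- \<rho>2 (V2 x2) + \<gamma>2 (norm u)))"
    proof (rule max_le_lie_set_cascade[OF _ _ V1_dec V2_dec])
      show "(p1, ?n *\<^sub>R p2) \<in> clarke_grad (cascade_lyapunov (weight_primitive \<nu>) V1 V2) (x1, x2)"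
        if "p1 \<in> clarke_grad V1 x1" "p2 \<in> clarke_grad V2 x2" for p1 p2
        using clarke_grad_cascade_pair[OF that V2_U V2_cont] V2_nonneg by simp
      show "0 \<le> ?n" by (rule weight_nonneg[OF \<nu> V2_nonneg])
    qed
    moreover
    have "(- \<rho>1 (V1 x1) + \<gamma>1 (V2 x2) + \<gamma>2 (norm u)) + ?n * (- \<rho>2 (V2 x2) + \<gamma>2 (norm u))
        = - \<rho>1 (V1 x1) + \<gamma>1 (V2 x2) + \<gamma>2 (norm u) - ?n * \<rho>2 (V2 x2) + ?n * \<gamma>2 (norm u)"
      by (simp add: algebra_simps)
    then have "(- \<rho>1 (V1 x1) + \<gamma>1 (V2 x2) + \<gamma>2 (norm u)) + ?n * (- \<rho>2 (V2 x2) + \<gamma>2 (norm u))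
        \<le> - \<rho> (integral {0..V2 x2} \<nu> + V1 x1) + \<gamma> (norm u)"
      using \<rho>_le[OF V1_nonneg[of x1] V2_nonneg[of x2]] \<gamma>_ge[OF V2_nonneg[of x2] norm_ge_zero[of u]]
        dominating_weight_ratio[OF \<gamma>1 classKinf_imp_classK[OF \<rho>2] \<nu>_dom V2_nonneg[of x2]]
      by linarith
    ultimately show ?thesis unfolding max_le_def by fastforce
  qed
  with \<open>classKinf \<rho>\<close> \<open>classK \<gamma>\<close> show ?thesis by blast
qed

theorem proposition4:
  fixes F1 :: "'a::euclidean_space \<Rightarrow> 'b::euclidean_space \<Rightarrow> 'c::euclidean_space \<Rightarrow> 'a set"
    and F2 :: "'b \<Rightarrow> 'c \<Rightarrow> 'b set"
    and V1 :: "'a \<Rightarrow> real" and V2 :: "'b \<Rightarrow> real"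
    and a2l a2u \<rho>2 \<gamma>2 a1l a1u \<rho>1 \<gamma>1 :: "real \<Rightarrow> real"
  assumes V2_np: "nonpathological V2"
    and K2: "classKinf a2l" "classKinf a2u" "classKinf \<rho>2" "classK \<gamma>2"
    and V2_bnd: "\<And>x2. a2l (norm x2) \<le> V2 x2 \<and> V2 x2 \<le> a2u (norm x2)"
    and V2_dec: "\<And>x2 u. max_le (lie_set V2 x2 (F2 x2 u)) (- \<rho>2 (V2 x2) + \<gamma>2 (norm u))"
    and V1_np: "nonpathological V1"
    and K1: "classKinf a1l" "classKinf a1u" "classKinf \<rho>1" "classKinf \<gamma>1"
    and V1_bnd: "\<And>x1. a1l (norm x1) \<le> V1 x1 \<and> V1 x1 \<le> a1u (norm x1)"
    and V1_dec: "\<And>x1 x2 u. max_le (lie_set V1 x1 (F1 x1 x2 u))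
                    (- \<rho>1 (V1 x1) + \<gamma>1 (V2 x2) + \<gamma>2 (norm u))"
    and A3: "\<exists>M>0. eventually (\<lambda>s. \<gamma>1 s / \<rho>2 s \<le> M) (at_right 0)"
  shows "(\<exists>\<nu>. continuous_on {0..} \<nu> \<and> mono_on {0..} \<nu> \<and> (\<forall>s\<ge>0. \<nu> s \<ge> 0) \<and>
            (\<forall>s>0. \<nu> s \<ge> 4 * (\<gamma>1 s / \<rho>2 s))) \<and>
         (\<forall>\<nu>. continuous_on {0..} \<nu> \<and> mono_on {0..} \<nu> \<and> (\<forall>s\<ge>0. \<nu> s \<ge> 0) \<and>
            (\<forall>s>0. \<nu> s \<ge> 4 * (\<gamma>1 s / \<rho>2 s)) \<longrightarrow>
          (let W = (\<lambda>(x1, x2). integral {0..V2 x2} \<nu> + V1 x1) in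
            nonpathological W \<and>
            (\<exists>al au. classKinf al \<and> classKinf au \<and>
               (\<forall>x1 x2. al (norm (x1, x2)) \<le> W (x1, x2) \<and> W (x1, x2) \<le> au (norm (x1, x2)))) \<and>
            (\<exists>\<rho> \<gamma>. classKinf \<rho> \<and> classK \<gamma> \<and>
               (\<forall>x1 x2 u. max_le (lie_set W (x1, x2) (F1 x1 x2 u \<times> F2 x2 u))
                             (- \<rho> (W (x1, x2)) + \<gamma> (norm u))))))"
proof (intro conjI allI impI, goal_cases)
  case 1
  show ?case
    using weight_dominating_ratio_exists[OF classKinf_imp_classK[OF K1(4)] classKinf_imp_classK[OF K2(3)] _ A3, of 4]
    unfolding weight_def by auto
next
  case (2 \<nu>)
  then have \<nu>: "weight \<nu>" and \<nu>_dom: "\<And>s. 0 < s \<Longrightarrow> 4 * (\<gamma>1 s / \<rho>2 s) \<le> \<nu> s"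
    unfolding weight_def by auto
  have \<nu>_pos: "\<And>s. 0 < s \<Longrightarrow> 0 < \<nu> s"
    by (rule dominating_weight_pos[OF classKinf_imp_classK[OF K1(4)] classKinf_imp_classK[OF K2(3)] _ \<nu>_dom]) simp
  have V1_nonneg: "0 \<le> V1 x" and V2_nonneg: "0 \<le> V2 y" for x y
    using V1_bnd[of x] V2_bnd[of y] K1(1) K2(1)
    by (smt (verit) classKinf_imp_classK classK_nonneg norm_ge_zero)+
  have V2_cont: "isCont V2 x" for x
    using V2_np loc_lipschitz_isCont unfolding nonpathological_def by blast
  have W_eq: "(\<lambda>(x1, x2). integral {0..V2 x2} \<nu> + V1 x1) = cascade_lyapunov (weight_primitive \<nu>) V1 V2"
    using weight_primitive_eq_integral[OF \<nu> V2_nonneg] by (auto simp: cascade_lyapunov_def)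
  show ?case
    using nonpathological_cascade_weight[OF \<nu> V2_nonneg V1_np V2_np]
      cascade_bounds[OF classKinf_integral_weight[OF \<nu> \<nu>_pos] K1(1,2) K2(1,2) V1_bnd V2_bnd]
      cascade_dissipation[OF \<nu> \<nu>_dom V1_nonneg V2_nonneg V2_cont K1(3) K2(3) classKinf_imp_classK[OF K1(4)]
        K2(4) V2_dec V1_dec]
    unfolding Let_def W_eq[symmetric] by simp
qed

end
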